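(* Assume $\mathbf{H}_0^m$ (with $m\ge2$). For $\delta>0$ and $x\in M$ define the $n$-tuples $F_\delta(x)=R_{E(x)-i\delta}(H_0(x))P_*^\perp(x)(\nabla_xP_* )(x)P_*(x)$ and $Y_\delta(x)=-i\delta R_{E(x)-i\delta}(H_0(x))(\nabla_xP_* )(x)P_*(x)$, where $P_*^\perp(x)=1-P_*(x)$. Then $F_\delta(\cdot)\in C^m_{\rm b}(M,\mathcal L(\mathcal H_{\rm f})^{\oplus n})$ and, under alternative (ii) or (iii), there is $C<\infty$ such that for all $\delta\in(0,\delta_0]$: $\|F_\delta\|_{\mathcal L(\mathcal H,D(H_0))}\le C\delta^{-1}\eta(\delta)$, $\sup_{|\alpha|=j}\|\partial^\alpha_xF_\delta\|_{\mathcal L(\mathcal H)}\le C\delta^{-(j+1)}\eta(\delta)$ for $1\le j\le m$, and $\|Y_\delta\|_{\mathcal L(\mathcal H)}\le C\eta(\delta)$. Under alternative (i), the two bounds on $F_\delta$ hold with $\eta\equiv1$ (for $\delta$ in some interval $(0,\delta_0]$) and $\lim_{\delta\to0}\|Y_\delta\|_{\mathcal L(\mathcal H)}=0$. Under alternative (iii) the derivative bounds improve to $\sup_{|\alpha|=j}\|\partial^\alpha_xF_\delta\|_{\mathcal L(\mathcal H)}\le C\delta^{-j}\eta(\delta)$ for $1\le j\le m$.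
   Context: Let $M=\mathbb R^n$, $\mathcal H_{\rm f}$ a separable Hilbert space, $\mathcal D\subset\mathcal H_{\rm f}$ dense, and for each $x\in M$ let $H_0(x)$ be self-adjoint with domain $\mathcal D$. With $\|\psi\|_{H_0(x)}=\|H_0(x)\psi\|+\|\psi\|$, assume there are $x_0\in M$ and $C_1,C_2<\infty$, $C_1>0$, with $C_1\|\psi\|_{H_0(x_0)}\le\|\psi\|_{H_0(x)}\le C_2\|\psi\|_{H_0(x_0)}$; $\mathcal D$ carries the norm $\|\cdot\|_{H_0(x_0)}$. $\mathcal H=L^2(M)\otimes\mathcal H_{\rm f}$, $H_0=\int^\oplus H_0(x)dx$ on $L^2(M)\otimes\mathcal D$, $D(H_0)$ with graph norm. $C^k_{\rm b}(\mathbb R^n,\mathcal E)$: $C^k$ maps with bounded derivatives of order $\le k$. $R_\lambda(A)=(A-\lambda)^{-1}$. Fibered operators act on $\mathcal H$ with norm $\operatorname{ess\,sup}_x\|A(x)\|$; norms of $n$-tuples include the Euclidean norm. Assumption $\mathbf{H}_0^m$: $H_0(\cdot)\in C^m_{\rm b}(M,\mathcal L(\mathcal D,\mathcal H_{\rm f}))$; each $P_*(x)$ is an orthogonal projection with $H_0(x)P_*(x)=E(x)P_*(x)$, $P_*(\cdot)\in C^{m+1}_{\rm b}(M,\mathcal L(\mathcal H_{\rm f}))$, $E(\cdot)\in C^m_{\rm b}(M,\mathbb R)$; and one of, for $1\le j,k\le n$: (i) $\lim_{\delta\to0}\operatorname{ess\,sup}_x\|\delta R_{E(x)-i\delta}(H_0(x))(\partial_{x_j}P_*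 )(x)P_*(x)\|=0$; (ii) there are $\delta_0>0$, $\eta:[0,\delta_0]\to[0,\delta_0]$ with $\eta(\delta)\ge\delta$, and $C$ such that for $\delta\in(0,\delta_0]$, $\operatorname{ess\,sup}_x\|R_{E(x)-i\delta}(H_0(x))(\partial_{x_j}P_* )(x)P_*(x)\|\le C\delta^{-1}\eta(\delta)$; (iii) (ii) and $\operatorname{ess\,sup}_x\|\partial_{x_k}(R_{E(x)-i\delta}(H_0(x))(\partial_{x_j}P_* )(x)P_*(x))\|\le C\delta^{-1}\eta(\delta)$. *)

theory Defs
  imports "HOL-Analysis.Analysis"
begin

text \<open>HOL-Analysis only has real inner product spaces, so we introduce complex
 inner product spaces (physics convention: linear in the second argument).\<close>

class complex_inner = real_normed_vector +
  fixes scaleC :: "complex \<Rightarrow> 'a \<Rightarrow> 'a"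
  fixes cinner :: "'a \<Rightarrow> 'a \<Rightarrow> complex"
  assumes scaleC_add_right: "scaleC a (x + y) = scaleC a x + scaleC a y"
    and scaleC_add_left: "scaleC (a + b) x = scaleC a x + scaleC b x"
    and scaleC_scaleC: "scaleC a (scaleC b x) = scaleC (a * b) x"
    and scaleC_one: "scaleC 1 x = x"
    and scaleC_of_real: "scaleC (complex_of_real r) x = scaleR r x"
    and cinner_conj: "cinner x y = cnj (cinner y x)"
    and cinner_add_right: "cinner x (y + z) = cinner x y + cinner x z"
    and cinner_scaleC_right: "cinner x (scaleC a y) = a * cinner x y"
    and cinner_self: "cinner x x = complex_of_real ((norm x)\<^sup>2)"

class chilbert_space = complex_inner + complete_space

text \<open>Self-adjoint (possibly unbounded) operator A with domain D, literally A = A*.\<close>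
definition selfadjoint_on :: "'h::complex_inner set \<Rightarrow> ('h \<Rightarrow> 'h) \<Rightarrow> bool" where
  "selfadjoint_on D A \<longleftrightarrow>
     0 \<in> D \<and> (\<forall>x\<in>D. \<forall>y\<in>D. x + y \<in> D) \<and> (\<forall>a. \<forall>x\<in>D. scaleC a x \<in> D) \<and>
     closure D = UNIV \<and>
     (\<forall>x\<in>D. \<forall>y\<in>D. A (x + y) = A x + A y) \<and>
     (\<forall>a. \<forall>x\<in>D. A (scaleC a x) = scaleC a (A x)) \<and>
     (\<forall>x\<in>D. \<forall>y\<in>D. cinner (A x) y = cinner x (A y)) \<and>
     (\<forall>\<psi> \<eta>. (\<forall>\<phi>\<in>D. cinner (A \<phi>) \<psi> = cinner \<phi> \<eta>) \<longrightarrow> \<psi> \<in> D)"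

definition orth_proj :: "('h::complex_inner \<Rightarrow>\<^sub>L 'h) \<Rightarrow> bool" where
  "orth_proj P \<longleftrightarrow> (\<forall>x. P (P x) = P x) \<and> (\<forall>x y. cinner (P x) y = cinner x (P y))"

definition gnorm :: "('h::real_normed_vector \<Rightarrow> 'h) \<Rightarrow> 'h \<Rightarrow> real" where
  "gnorm A \<psi> = norm (A \<psi>) + norm \<psi>"

definition resolv :: "'h::complex_inner set \<Rightarrow> ('h \<Rightarrow> 'h) \<Rightarrow> complex \<Rightarrow> 'h \<Rightarrow> 'h" where
  "resolv D A z \<phi> = (THE \<psi>. \<psi> \<in> D \<and> A \<psi> - scaleC z \<psi> = \<phi>)"

definition partial :: "(real^'n \<Rightarrow> 'b::real_normed_vector) \<Rightarrow> 'n \<Rightarrow> real^'n \<Rightarrow> 'b" where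
  "partial f j = (\<lambda>x. frechet_derivative f (at x) (axis j 1))"

text \<open>Iterated partial derivative along a list of coordinate indices (a multi-index).\<close>
fun pderivs :: "(real^'n \<Rightarrow> 'b::real_normed_vector) \<Rightarrow> 'n list \<Rightarrow> real^'n \<Rightarrow> 'b" where
  "pderivs f [] = f"
| "pderivs f (j # js) = partial (pderivs f js) j"

fun Cb :: "nat \<Rightarrow> (real^'n \<Rightarrow> 'b::real_normed_vector) \<Rightarrow> bool" where
  "Cb 0 f \<longleftrightarrow> continuous_on UNIV f \<and> bounded (range f)"
| "Cb (Suc k) f \<longleftrightarrow> continuous_on UNIV f \<and> bounded (range f) \<and>
      (\<forall>x. f differentiable (at x)) \<and> (\<forall>j. Cb k (partial f j))"

text \<open>H0(.) in C^k_b(M, L(D,H_f)), where D carries the graph norm of H0(x0).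
 We use the Banach space isomorphism L(D,H_f) \<cong> L(H_f), T \<mapsto> T (H0(x0) - i)^{-1}:
 H0(.) is C^k_b into L(D,H_f) iff x \<mapsto> H0(x)(H0(x0) - i)^{-1} is C^k_b into L(H_f).\<close>
definition CbD :: "nat \<Rightarrow> 'h::complex_inner set \<Rightarrow> (real^'n \<Rightarrow> 'h \<Rightarrow> 'h) \<Rightarrow> real^'n \<Rightarrow> bool" where
  "CbD k D H0 x0 \<longleftrightarrow> (\<exists>G :: real^'n \<Rightarrow> ('h \<Rightarrow>\<^sub>L 'h). Cb k G \<and>
      (\<forall>x. \<forall>\<psi>\<in>D. blinfun_apply (G x) (H0 x0 \<psi> - scaleC \<i> \<psi>) = H0 x \<psi>))"

definition spec_pt :: "(real^'n \<Rightarrow> real) \<Rightarrow> real \<Rightarrow> real^'n \<Rightarrow> complex" where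
  "spec_pt E \<delta> x = complex_of_real (E x) - \<i> * complex_of_real \<delta>"

definition RB :: "'h::complex_inner set \<Rightarrow> (real^'n \<Rightarrow> 'h \<Rightarrow> 'h) \<Rightarrow> (real^'n \<Rightarrow> real) \<Rightarrow> real
                   \<Rightarrow> real^'n \<Rightarrow> ('h \<Rightarrow>\<^sub>L 'h) \<Rightarrow> ('h \<Rightarrow>\<^sub>L 'h)" where
  "RB D H0 E \<delta> x B = Blinfun (\<lambda>\<phi>. resolv D (H0 x) (spec_pt E \<delta> x) (blinfun_apply B \<phi>))"

definition RdPP where
  "RdPP D H0 E P \<delta> j x = RB D H0 E \<delta> x (partial P j x o\<^sub>L P x)"

definition Fdelta :: "'h::complex_inner set \<Rightarrow> (real^'n \<Rightarrow> 'h \<Rightarrow> 'h) \<Rightarrow> (real^'n \<Rightarrow> real)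
     \<Rightarrow> (real^'n \<Rightarrow> ('h \<Rightarrow>\<^sub>L 'h)) \<Rightarrow> real \<Rightarrow> real^'n \<Rightarrow> ('h \<Rightarrow>\<^sub>L 'h)^'n" where
  "Fdelta D H0 E P \<delta> x = (\<chi> j. RB D H0 E \<delta> x ((id_blinfun - P x) o\<^sub>L partial P j x o\<^sub>L P x))"

definition Ydelta :: "'h::complex_inner set \<Rightarrow> (real^'n \<Rightarrow> 'h \<Rightarrow> 'h) \<Rightarrow> (real^'n \<Rightarrow> real)
     \<Rightarrow> (real^'n \<Rightarrow> ('h \<Rightarrow>\<^sub>L 'h)) \<Rightarrow> real \<Rightarrow> real^'n \<Rightarrow> ('h \<Rightarrow>\<^sub>L 'h)^'n" where
  "Ydelta D H0 E P \<delta> x = (\<chi> j. Blinfun (\<lambda>\<phi>. scaleC (- \<i> * complex_of_real \<delta>)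
        (blinfun_apply (RdPP D H0 E P \<delta> j x) \<phi>)))"

text \<open>Fibre norm of an n-tuple of maps H_f \<rightarrow> D(H0(x)), graph norm of H0(x), Euclidean in the tuple:
 F(x) \<psi> has norm bounded by K \<parallel>\<psi>\<parallel>, with values in D.\<close>
definition tuple_bound_D :: "'h::complex_inner set \<Rightarrow> ('h \<Rightarrow> 'h) \<Rightarrow> ('h \<Rightarrow>\<^sub>L 'h)^'n::finite \<Rightarrow> real \<Rightarrow> bool" where
  "tuple_bound_D D A T K \<longleftrightarrow> (\<forall>\<psi> j. blinfun_apply (T $ j) \<psi> \<in> D) \<and>
     (\<forall>\<psi>. sqrt (\<Sum>j\<in>UNIV. (gnorm A (blinfun_apply (T $ j) \<psi>))\<^sup>2) \<le> K * norm \<psi>)"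

definition alt_i where
  "alt_i D H0 E P \<longleftrightarrow> (\<forall>j. \<forall>\<epsilon>>0. \<exists>d>0. \<forall>\<delta>. 0 < \<delta> \<and> \<delta> < d \<longrightarrow>
       (\<forall>x. \<delta> * norm (RdPP D H0 E P \<delta> j x) \<le> \<epsilon>))"

definition alt_ii where
  "alt_ii D H0 E P \<delta>0 (\<eta>::real \<Rightarrow> real) C \<longleftrightarrow> \<delta>0 > 0 \<and>
     (\<forall>\<delta>\<in>{0..\<delta>0}. \<delta> \<le> \<eta> \<delta> \<and> \<eta> \<delta> \<le> \<delta>0) \<and>
     (\<forall>j. \<forall>\<delta>\<in>{0<..\<delta>0}. \<forall>x. norm (RdPP D H0 E P \<delta> j x) \<le> C / \<delta> * \<eta> \<delta>)"

definition alt_iii where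
  "alt_iii D H0 E P \<delta>0 \<eta> C \<longleftrightarrow> alt_ii D H0 E P \<delta>0 \<eta> C \<and>
     (\<forall>j k. \<forall>\<delta>\<in>{0<..\<delta>0}. \<forall>x. norm (partial (RdPP D H0 E P \<delta> j) k x) \<le> C / \<delta> * \<eta> \<delta>)"

end

theory Submission
  imports Defs
begin

text \<open>
  Write \<open>z = E(x) - i\<delta>\<close>, \<open>R\<^sub>\<delta>(x) = (H\<^sub>0(x) - z)\<^sup>-\<^sup>1\<close> and \<open>S = (H\<^sub>0(x\<^sub>0) - i)\<^sup>-\<^sup>1\<close>.
  The resolvent factors as \<open>R\<^sub>\<delta>(x) = S Q\<^sub>\<delta>(x)\<close> with \<open>Q\<^sub>\<delta>(x) = (H\<^sub>0(x\<^sub>0) - i) R\<^sub>\<delta>(x)\<close>, which by the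
  uniform equivalence of the graph norms is bounded by \<open>O(1/\<delta>)\<close>. Moreover \<open>Q\<^sub>\<delta>(x)\<close> is the inverse
  of \<open>K\<^sub>\<delta>(x) = (H\<^sub>0(x) - z) S\<close>, a \<open>C\<^sup>m\<^sub>b\<close> family of bounded operators, so \<open>Q\<^sub>\<delta>\<close> is \<open>C\<^sup>m\<^sub>b\<close> too.
  Since \<open>P\<^sub>* (\<partial>P\<^sub>*) P\<^sub>* = 0\<close> for a family of projections, \<open>F\<^sub>\<delta> = S Q\<^sub>\<delta> B\<close> with \<open>B = (\<partial>P\<^sub>*) P\<^sub>*\<close>.

  Differentiating \<open>K\<^sub>\<delta> (Q\<^sub>\<delta> B) = B\<close> by the Leibniz rule gives
  \<open>\<partial>\<^sup>\<alpha>(Q\<^sub>\<delta> B) = Q\<^sub>\<delta> (\<partial>\<^sup>\<alpha>B - \<Sum>\<^bsub>\<beta>\<noteq>0\<^esub> \<partial>\<^sup>\<beta>K \<partial>\<^sup>\<gamma>(Q\<^sub>\<delta> B))\<close>, where the derivatives of \<open>K\<^sub>\<delta>\<close> do not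
  depend on \<open>\<delta>\<close>; so every derivative costs one factor \<open>\<parallel>Q\<^sub>\<delta>\<parallel> = O(1/\<delta>)\<close>. The undifferentiated
  \<open>Q\<^sub>\<delta> B\<close> is controlled by the graph norm estimate \<open>\<parallel>Q\<^sub>\<delta> X\<parallel> \<lesssim> \<parallel>X\<parallel> + \<parallel>R\<^sub>\<delta> X\<parallel>\<close> together with the
  hypothesis \<open>\<parallel>R\<^sub>\<delta> B\<parallel> = O(\<eta>(\<delta>)/\<delta>)\<close>; under (iii) the same estimate applies to the first derivative,
  which saves one power of \<open>\<delta>\<close> in all higher ones. Alternative (i) is (ii) with \<open>\<eta> = 1\<close>, by the
  trivial bound \<open>\<parallel>R\<^sub>\<delta>\<parallel> \<le> 1/\<delta>\<close>.
\<close>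

section \<open>Complex inner product spaces\<close>

lemma cinner_add_left: "cinner (x + y) z = cinner x z + cinner y z"
proof -
  have "cinner (x + y) z = cnj (cinner z (x + y))" by (rule cinner_conj)
  also have "\<dots> = cnj (cinner z x) + cnj (cinner z y)" by (simp add: cinner_add_right)
  also have "\<dots> = cinner x z + cinner y z" by (simp add: cinner_conj[of x z] cinner_conj[of y z])
  finally show ?thesis .
qed

lemma cinner_scaleC_left: "cinner (scaleC a x) y = cnj a * cinner x y"
proof -
  have "cinner (scaleC a x) y = cnj (cinner y (scaleC a x))" by (rule cinner_conj)
  also have "\<dots> = cnj a * cnj (cinner y x)" by (simp add: cinner_scaleC_right)
  also have "\<dots> = cnj a * cinner x y" by (simp add: cinner_conj[of x y])
  finally show ?thesis .
qed

lemma cinner_zero_right [simp]: "cinner x 0 = 0"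
  using cinner_add_right[of x 0 0] by simp

lemma cinner_zero_left [simp]: "cinner 0 x = 0"
  using cinner_add_left[of 0 0 x] by simp

lemma cinner_minus_right: "cinner x (- y) = - cinner x y"
proof -
  have "cinner x y + cinner x (- y) = 0" using cinner_add_right[of x y "-y"] by simp
  then show ?thesis by (rule add_eq_0_iff[THEN iffD1])
qed

lemma cinner_minus_left: "cinner (- x) y = - cinner x y"
proof -
  have "cinner x y + cinner (- x) y = 0" using cinner_add_left[of x "-x" y] by simp
  then show ?thesis by (rule add_eq_0_iff[THEN iffD1])
qed

lemma cinner_diff_right: "cinner x (y - z) = cinner x y - cinner x z"
  by (simp only: diff_conv_add_uminus cinner_add_right cinner_minus_right)

lemma cinner_diff_left: "cinner (x - y) z = cinner x z - cinner y z"
  by (simp only: diff_conv_add_uminus cinner_add_left cinner_minus_left)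

lemma cinner_scaleR_right: "cinner x (scaleR r y) = complex_of_real r * cinner x y"
  using cinner_scaleC_right[of x "complex_of_real r" y] by (simp add: scaleC_of_real)

lemma cinner_scaleR_left: "cinner (scaleR r x) y = complex_of_real r * cinner x y"
  using cinner_scaleC_left[of "complex_of_real r" x y] by (simp add: scaleC_of_real)

lemma scaleC_zero [simp]: "scaleC a 0 = 0"
  using scaleC_add_right[of a 0 0] by simp

lemma scaleC_zero_left [simp]: "scaleC 0 x = 0"
  using scaleC_of_real[of 0 x] by simp

lemma scaleC_minus: "scaleC a (- x) = - scaleC a x"
proof -
  have "scaleC a x + scaleC a (- x) = 0" using scaleC_add_right[of a x "-x"] by simp
  then show ?thesis by (rule add_eq_0_iff[THEN iffD1])
qed

lemma scaleC_diff: "scaleC a (x - y) = scaleC a x - scaleC a y"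
  by (simp only: diff_conv_add_uminus scaleC_add_right scaleC_minus)

lemma scaleC_minus_left: "scaleC (- a) x = - scaleC a x"
proof -
  have "scaleC a x + scaleC (- a) x = 0" using scaleC_add_left[of a "-a" x] by simp
  then show ?thesis by (rule add_eq_0_iff[THEN iffD1])
qed

lemma scaleC_diff_left: "scaleC (a - b) x = scaleC a x - scaleC b x"
  by (simp only: diff_conv_add_uminus scaleC_add_left scaleC_minus_left)

lemma scaleC_scaleR: "scaleC a (scaleR r x) = scaleR r (scaleC a x)"
proof -
  have "scaleC a (scaleR r x) = scaleC a (scaleC (complex_of_real r) x)" by (simp add: scaleC_of_real)
  also have "\<dots> = scaleC (complex_of_real r) (scaleC a x)" by (simp add: scaleC_scaleC mult.commute)
  finally show ?thesis by (simp add: scaleC_of_real)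
qed

lemma norm_scaleC: "norm (scaleC a x) = cmod a * norm x"
proof -
  have "complex_of_real ((norm (scaleC a x))\<^sup>2) = cinner (scaleC a x) (scaleC a x)"
    by (rule cinner_self[symmetric])
  also have "\<dots> = (a * cnj a) * cinner x x"
    by (simp add: cinner_scaleC_left cinner_scaleC_right mult.commute mult.left_commute)
  also have "\<dots> = complex_of_real ((cmod a)\<^sup>2) * complex_of_real ((norm x)\<^sup>2)"
    by (simp only: complex_norm_square cinner_self)
  also have "\<dots> = complex_of_real ((cmod a * norm x)\<^sup>2)"
    by (simp only: of_real_mult[symmetric] power_mult_distrib)
  finally have "(norm (scaleC a x))\<^sup>2 = (cmod a * norm x)\<^sup>2"
    using of_real_eq_iff by blast
  then show ?thesis by (simp add: power2_eq_iff_nonneg)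
qed

lemma norm_sq_add: "(norm (x + y))\<^sup>2 = (norm x)\<^sup>2 + (norm y)\<^sup>2 + 2 * Re (cinner x y)"
proof -
  have "complex_of_real ((norm (x + y))\<^sup>2) = cinner (x + y) (x + y)"
    by (rule cinner_self[symmetric])
  also have "\<dots> = cinner x x + cinner y y + (cinner x y + cinner y x)"
    by (simp add: cinner_add_left cinner_add_right algebra_simps)
  also have "cinner x y + cinner y x = complex_of_real (2 * Re (cinner x y))"
    by (simp add: cinner_conj[of y x] complex_add_cnj)
  finally have "complex_of_real ((norm (x + y))\<^sup>2) =
     complex_of_real ((norm x)\<^sup>2) + complex_of_real ((norm y)\<^sup>2) + complex_of_real (2 * Re (cinner x y))"
    by (simp only: cinner_self)
  then have "complex_of_real ((norm (x + y))\<^sup>2) =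
     complex_of_real ((norm x)\<^sup>2 + (norm y)\<^sup>2 + 2 * Re (cinner x y))"
    by (simp only: of_real_add)
  then show ?thesis using of_real_eq_iff by blast
qed

lemma norm_sq_diff: "(norm (x - y))\<^sup>2 = (norm x)\<^sup>2 + (norm y)\<^sup>2 - 2 * Re (cinner x y)"
  using norm_sq_add[of x "-y"] by (simp add: cinner_minus_right)

lemma Re_cinner_le: "Re (cinner x y) \<le> norm x * norm y"
proof (cases "norm x = 0 \<or> norm y = 0")
  case True then show ?thesis by auto
next
  case False
  let ?a = "norm x" and ?b = "norm y"
  have pos: "?a > 0" "?b > 0" using False by auto
  have "0 \<le> (norm (scaleR ?b x - scaleR ?a y))\<^sup>2" by simp
  also have "\<dots> = ?b^2 * ?a^2 + ?a^2 * ?b^2 - 2 * (?a * ?b * Re (cinner x y))"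
    by (simp add: norm_sq_diff cinner_scaleR_left cinner_scaleR_right power_mult_distrib)
  finally have "?a * ?b * Re (cinner x y) \<le> ?a * ?b * (?a * ?b)"
    by (simp add: power2_eq_square algebra_simps)
  then show ?thesis using pos by (simp add: mult_le_cancel_left_pos)
qed

lemma cinner_Cauchy_Schwarz: "cmod (cinner x y) \<le> norm x * norm y"
proof (cases "cinner x y = 0")
  case True then show ?thesis by simp
next
  case False
  define c where "c = cinner x y"
  define u where "u = cnj c / complex_of_real (cmod c)"
  have cu: "cmod u = 1" using False by (simp add: u_def norm_divide c_def)
  have "c * cnj c = complex_of_real ((cmod c)\<^sup>2)" by (rule complex_norm_square[symmetric])
  then have "u * c = complex_of_real (cmod c)"
    using False by (simp add: u_def c_def field_simps power2_eq_square mult.commute)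
  then have "cinner x (scaleC u y) = complex_of_real (cmod c)"
    by (simp add: cinner_scaleC_right c_def)
  then have "cmod c = Re (cinner x (scaleC u y))" by simp
  also have "\<dots> \<le> norm x * norm (scaleC u y)" by (rule Re_cinner_le)
  also have "\<dots> = norm x * norm y" by (simp add: norm_scaleC cu)
  finally show ?thesis by (simp add: c_def)
qed

lemma bounded_linear_cinner_left: "bounded_linear (\<lambda>x. cinner x w)"
  by (rule bounded_linear_intro[where K="norm w"])
     (auto simp: cinner_add_left cinner_scaleR_left scaleR_conv_of_real cinner_Cauchy_Schwarz)

lemma bounded_linear_cinner_right: "bounded_linear (\<lambda>x. cinner w x)"
  by (rule bounded_linear_intro[where K="norm w"])
     (auto simp: cinner_add_right cinner_scaleR_right scaleR_conv_of_real,
      metis cinner_Cauchy_Schwarz mult.commute)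

lemma dense_orthogonal_eq_0:
  assumes "closure D = UNIV" "\<forall>\<phi>\<in>D. cinner \<phi> w = 0"
  shows "w = 0"
proof -
  have "closed {\<phi>. cinner \<phi> w = 0}"
    by (rule closed_Collect_eq[OF linear_continuous_on[OF bounded_linear_cinner_left] continuous_on_const])
  moreover have "D \<subseteq> {\<phi>. cinner \<phi> w = 0}" using assms(2) by auto
  ultimately have "closure D \<subseteq> {\<phi>. cinner \<phi> w = 0}" by (rule closure_minimal[rotated])
  then have "cinner w w = 0" using assms(1) by auto
  then have "norm w = 0" by (metis cinner_self of_real_eq_0_iff zero_eq_power2)
  then show ?thesis by simp
qed

lemma bounded_linear_scaleC: "bounded_linear (\<lambda>x::'a::complex_inner. scaleC c x)"
  by (rule bounded_linear_intro[where K="cmod c"])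
     (auto simp: scaleC_add_right scaleC_scaleR norm_scaleC mult.commute)

lemma nonneg_quadratic_imp_linear_coeff_0:
  fixes a c :: real
  assumes "\<And>t. 0 \<le> t\<^sup>2 * c - 2 * t * a" "0 \<le> c"
  shows "a = 0"
proof -
  define s where "s = 1 / (c + 1)"
  have s: "0 < s" "s * c \<le> 1" using assms(2) by (auto simp: s_def field_simps)
  have "0 \<le> (a * s)\<^sup>2 * c - 2 * (a * s) * a" by (rule assms(1))
  also have "\<dots> = (a\<^sup>2 * s) * (s * c - 2)" by (simp add: power2_eq_square algebra_simps)
  also have "\<dots> \<le> (a\<^sup>2 * s) * (-1)" using s by (intro mult_left_mono) auto
  finally have "a\<^sup>2 * s \<le> 0" by simp
  then have "a\<^sup>2 \<le> 0" using s(1) by (simp add: mult_le_0_iff)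
  then show ?thesis by simp
qed

lemma parallelogram_law:
  fixes x y :: "'a::complex_inner"
  shows "(norm (x + y))\<^sup>2 + (norm (x - y))\<^sup>2 = 2 * (norm x)\<^sup>2 + 2 * (norm y)\<^sup>2"
  by (simp add: norm_sq_add norm_sq_diff)

lemma convex_minimizing_sequence_Cauchy:
  fixes v :: "nat \<Rightarrow> 'a::complex_inner"
  assumes "convex U" and v: "\<And>n. v n \<in> U" and d: "\<And>u. u \<in> U \<Longrightarrow> d \<le> norm (\<phi> - u)"
    and lim: "(\<lambda>n. norm (\<phi> - v n)) \<longlonglongrightarrow> d"
  shows "Cauchy v"
proof (rule metric_CauchyI)
  fix \<epsilon> :: real
  assume "0 < \<epsilon>"
  have "0 \<le> d"
    using lim by (rule LIMSEQ_le_const) simp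
  have "(\<lambda>n. (norm (\<phi> - v n))\<^sup>2) \<longlonglongrightarrow> d\<^sup>2"
    by (intro tendsto_intros lim)
  then have "\<forall>\<^sub>F n in sequentially. (norm (\<phi> - v n))\<^sup>2 < d\<^sup>2 + \<epsilon>\<^sup>2 / 4"
    using \<open>0 < \<epsilon>\<close> by (intro order_tendstoD(2)) auto
  then obtain N where N: "\<And>n. N \<le> n \<Longrightarrow> (norm (\<phi> - v n))\<^sup>2 < d\<^sup>2 + \<epsilon>\<^sup>2 / 4"
    by (auto simp: eventually_sequentially)
  have "dist (v m) (v n) < \<epsilon>" if "N \<le> m" "N \<le> n" for m n
  proof -
    have "scaleR (1/2) (v m) + scaleR (1/2) (v n) \<in> U"
      using \<open>convex U\<close> v by (intro convexD) auto
    then have "2 * d \<le> 2 * norm (\<phi> - (scaleR (1/2) (v m) + scaleR (1/2) (v n)))"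
      using d by simp
    also have "\<dots> = norm (scaleR 2 (\<phi> - (scaleR (1/2) (v m) + scaleR (1/2) (v n))))"
      by simp
    also have "scaleR 2 (\<phi> - (scaleR (1/2) (v m) + scaleR (1/2) (v n))) = (\<phi> - v m) + (\<phi> - v n)"
      by (simp add: scaleR_right_diff_distrib scaleR_right_distrib scaleR_2)
    finally have "4 * d\<^sup>2 \<le> (norm ((\<phi> - v m) + (\<phi> - v n)))\<^sup>2"
      using \<open>0 \<le> d\<close> by (metis (no_types, opaque_lifting) four_x_squared mult_nonneg_nonneg power_mono zero_le_numeral)
    moreover have "(norm ((\<phi> - v m) + (\<phi> - v n)))\<^sup>2 + (norm (v m - v n))\<^sup>2 =
        2 * (norm (\<phi> - v m))\<^sup>2 + 2 * (norm (\<phi> - v n))\<^sup>2"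
      using parallelogram_law[of "\<phi> - v m" "\<phi> - v n"] by (simp add: norm_minus_commute)
    ultimately have "(norm (v m - v n))\<^sup>2 < \<epsilon>\<^sup>2"
      using N[OF that(1)] N[OF that(2)] by linarith
    then show ?thesis
      using \<open>0 < \<epsilon>\<close> by (simp add: dist_norm power_less_imp_less_base)
  qed
  then show "\<exists>N. \<forall>m\<ge>N. \<forall>n\<ge>N. dist (v m) (v n) < \<epsilon>"
    by blast
qed

lemma best_approximation_exists:
  fixes U :: "'a::chilbert_space set"
  assumes "convex U" and "closed U" and "U \<noteq> {}"
  shows "\<exists>u\<in>U. \<forall>w\<in>U. norm (\<phi> - u) \<le> norm (\<phi> - w)"
proof -
  define d where "d = Inf ((\<lambda>w. norm (\<phi> - w)) ` U)"
  have bdd: "bdd_below ((\<lambda>w. norm (\<phi> - w)) ` U)"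
    by (auto intro: bdd_belowI[where m=0])
  have d_le: "d \<le> norm (\<phi> - w)" if "w \<in> U" for w
    unfolding d_def using bdd that by (auto intro: cInf_lower)
  have "\<exists>w\<in>U. norm (\<phi> - w) < d + inverse (real (Suc n))" for n
    using cInf_lessD[of "(\<lambda>w. norm (\<phi> - w)) ` U" "d + inverse (real (Suc n))"] \<open>U \<noteq> {}\<close>
    by (auto simp: d_def)
  then obtain v where v: "\<And>n. v n \<in> U" and v_lt: "\<And>n. norm (\<phi> - v n) < d + inverse (real (Suc n))"
    by metis
  have lim: "(\<lambda>n. norm (\<phi> - v n)) \<longlonglongrightarrow> d"
  proof (rule tendsto_sandwich[OF _ _ tendsto_const LIMSEQ_inverse_real_of_nat_add])
    show "\<forall>\<^sub>F n in sequentially. d \<le> norm (\<phi> - v n)"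
      using d_le v by simp
    show "\<forall>\<^sub>F n in sequentially. norm (\<phi> - v n) \<le> d + inverse (real (Suc n))"
      using v_lt by (simp add: less_imp_le)
  qed
  have "Cauchy v"
    using \<open>convex U\<close> v d_le lim by (rule convex_minimizing_sequence_Cauchy)
  then obtain u where u: "v \<longlonglongrightarrow> u"
    using Cauchy_convergent_iff convergent_def by blast
  have "u \<in> U"
    using \<open>closed U\<close> v u by (auto simp: closed_sequential_limits)
  moreover have "(\<lambda>n. norm (\<phi> - v n)) \<longlonglongrightarrow> norm (\<phi> - u)"
    by (intro tendsto_intros u)
  then have "norm (\<phi> - u) = d"
    using lim by (rule LIMSEQ_unique)
  ultimately show ?thesis
    using d_le by auto
qed

lemma best_approximation_orthogonal:
  assumes min: "\<forall>w\<in>U. norm (\<phi> - u) \<le> norm (\<phi> - w)" and shift: "\<And>c. u + scaleC c v \<in> U"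
  shows "cinner v (\<phi> - u) = 0"
proof -
  have Re0: "Re (cinner (\<phi> - u) (scaleC c v)) = 0" for c
  proof (rule nonneg_quadratic_imp_linear_coeff_0)
    fix t :: real
    have "norm (\<phi> - u) \<le> norm ((\<phi> - u) - scaleR t (scaleC c v))"
      using min shift[of "complex_of_real t * c"]
      by (simp add: scaleC_of_real[symmetric] scaleC_scaleC diff_diff_eq)
    then have "(norm (\<phi> - u))\<^sup>2 \<le> (norm ((\<phi> - u) - scaleR t (scaleC c v)))\<^sup>2"
      by (simp add: power_mono)
    then show "0 \<le> t\<^sup>2 * (norm (scaleC c v))\<^sup>2 - 2 * t * Re (cinner (\<phi> - u) (scaleC c v))"
      by (simp add: norm_sq_diff cinner_scaleR_right power_mult_distrib)
  qed simp
  have "Re (cinner (\<phi> - u) v) = 0" "Im (cinner (\<phi> - u) v) = 0"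
    using Re0[of 1] Re0[of \<i>] by (simp_all add: scaleC_one cinner_scaleC_right)
  then have "cinner (\<phi> - u) v = 0"
    by (simp add: complex_eq_iff)
  then show ?thesis
    by (metis cinner_conj complex_cnj_zero)
qed

section \<open>Self-adjoint operators and their resolvents\<close>

abbreviation A_minus :: "('h::complex_inner \<Rightarrow> 'h) \<Rightarrow> complex \<Rightarrow> 'h \<Rightarrow> 'h" where
  "A_minus A z \<psi> \<equiv> A \<psi> - scaleC z \<psi>"

context
  fixes D :: "'h::complex_inner set" and A :: "'h \<Rightarrow> 'h"
  assumes sa: "selfadjoint_on D A"
begin

lemma sa_dom_0: "0 \<in> D" using sa unfolding selfadjoint_on_def by blast
lemma sa_dom_add: "x \<in> D \<Longrightarrow> y \<in> D \<Longrightarrow> x + y \<in> D" using sa unfolding selfadjoint_on_def by blast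
lemma sa_dom_scaleC: "x \<in> D \<Longrightarrow> scaleC a x \<in> D" using sa unfolding selfadjoint_on_def by blast
lemma sa_dom_dense: "closure D = UNIV" using sa unfolding selfadjoint_on_def by blast
lemma sa_add: "x \<in> D \<Longrightarrow> y \<in> D \<Longrightarrow> A (x + y) = A x + A y" using sa unfolding selfadjoint_on_def by blast
lemma sa_scaleC: "x \<in> D \<Longrightarrow> A (scaleC a x) = scaleC a (A x)" using sa unfolding selfadjoint_on_def by blast
lemma sa_symmetric: "x \<in> D \<Longrightarrow> y \<in> D \<Longrightarrow> cinner (A x) y = cinner x (A y)" using sa unfolding selfadjoint_on_def by blast
lemma sa_adjoint_dom: "(\<And>\<phi>. \<phi> \<in> D \<Longrightarrow> cinner (A \<phi>) \<psi> = cinner \<phi> \<eta>) \<Longrightarrow> \<psi> \<in> D"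
  using sa unfolding selfadjoint_on_def by blast

lemma sa_dom_scaleR: "x \<in> D \<Longrightarrow> scaleR r x \<in> D"
  using sa_dom_scaleC[of x "complex_of_real r"] by (simp add: scaleC_of_real)
lemma sa_scaleR: "x \<in> D \<Longrightarrow> A (scaleR r x) = scaleR r (A x)"
  using sa_scaleC[of x "complex_of_real r"] by (simp add: scaleC_of_real)
lemma sa_dom_diff: "x \<in> D \<Longrightarrow> y \<in> D \<Longrightarrow> x - y \<in> D"
  using sa_dom_add[of x "- y"] sa_dom_scaleR[of y "- 1"] by simp
lemma sa_diff: "x \<in> D \<Longrightarrow> y \<in> D \<Longrightarrow> A (x - y) = A x - A y"
  using sa_add[of x "- y"] sa_dom_scaleR[of y "- 1"] sa_scaleR[of y "- 1"] by simp

lemma sa_cinner_real: "x \<in> D \<Longrightarrow> Im (cinner (A x) x) = 0"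
  by (metis cinner_conj cnj.sel(2) neg_equal_zero sa_symmetric)

lemma A_minus_add: "x \<in> D \<Longrightarrow> y \<in> D \<Longrightarrow> A_minus A z (x + y) = A_minus A z x + A_minus A z y"
  by (simp add: sa_add scaleC_add_right)
lemma A_minus_diff: "x \<in> D \<Longrightarrow> y \<in> D \<Longrightarrow> A_minus A z (x - y) = A_minus A z x - A_minus A z y"
  by (simp add: sa_diff scaleC_diff)
lemma A_minus_scaleR: "x \<in> D \<Longrightarrow> A_minus A z (scaleR r x) = scaleR r (A_minus A z x)"
  by (simp add: sa_scaleR scaleC_scaleR scaleR_diff_right)
lemma A_minus_scaleC: "x \<in> D \<Longrightarrow> A_minus A z (scaleC c x) = scaleC c (A_minus A z x)"
  by (simp add: sa_scaleC scaleC_scaleC scaleC_diff mult.commute)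

text \<open>Pythagoras: \<open>A x - Re z x\<close> and \<open>i Im z x\<close> are orthogonal over \<open>\<real>\<close> because \<open>\<langle>A x, x\<rangle>\<close> is real.\<close>
lemma A_minus_lower_bound:
  assumes x: "x \<in> D"
  shows "\<bar>Im z\<bar> * norm x \<le> norm (A_minus A z x)"
proof -
  define a where "a = complex_of_real (Re z)"
  define b where "b = complex_of_real (Im z)"
  define u where "u = A x - scaleC a x"
  have z: "z = a + \<i> * b" by (simp add: a_def b_def complex_eq_iff)
  have e: "A_minus A z x = u - scaleC (\<i> * b) x"
    by (simp add: u_def z scaleC_add_left)
  have ux: "cinner u x = cinner (A x) x - cnj a * cinner x x"
    by (simp add: u_def cinner_diff_left cinner_scaleC_left)
  have "Im (cinner u x) = 0" using sa_cinner_real[OF x]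
    by (simp add: ux a_def cinner_self)
  then have "Re (cinner u (scaleC (\<i> * b) x)) = 0"
    by (simp add: cinner_scaleC_right b_def)
  then have "(norm (A_minus A z x))\<^sup>2 = (norm u)\<^sup>2 + (norm (scaleC (\<i> * b) x))\<^sup>2"
    by (simp add: e norm_sq_diff)
  also have "norm (scaleC (\<i> * b) x) = \<bar>Im z\<bar> * norm x"
    by (simp add: norm_scaleC b_def norm_mult)
  finally have "(\<bar>Im z\<bar> * norm x)\<^sup>2 \<le> (norm (A_minus A z x))\<^sup>2" by simp
  then show ?thesis by (rule power2_le_imp_le) simp
qed

lemma sa_closed_graph:
  assumes xD: "\<And>n. X n \<in> D" and lx: "X \<longlonglongrightarrow> x" and ly: "(\<lambda>n. A (X n)) \<longlonglongrightarrow> y"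
  shows "x \<in> D \<and> A x = y"
proof -
  have eq: "cinner (A \<phi>) x = cinner \<phi> y" if \<phi>: "\<phi> \<in> D" for \<phi>
  proof -
    have "(\<lambda>n. cinner (A \<phi>) (X n)) \<longlonglongrightarrow> cinner (A \<phi>) x"
      by (rule bounded_linear.tendsto[OF bounded_linear_cinner_right lx])
    moreover have "(\<lambda>n. cinner \<phi> (A (X n))) \<longlonglongrightarrow> cinner \<phi> y"
      by (rule bounded_linear.tendsto[OF bounded_linear_cinner_right ly])
    moreover have "cinner (A \<phi>) (X n) = cinner \<phi> (A (X n))" for n using sa_symmetric[OF \<phi> xD] .
    ultimately show ?thesis using LIMSEQ_unique by auto
  qed
  then have xD: "x \<in> D" by (rule sa_adjoint_dom)
  have "\<forall>\<phi>\<in>D. cinner \<phi> (A x - y) = 0"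
    using eq sa_symmetric[OF _ xD] by (simp add: cinner_diff_right)
  then have "A x - y = 0"
    by (rule dense_orthogonal_eq_0[OF sa_dom_dense])
  then show ?thesis using xD by simp
qed

end

context
  fixes D :: "'h::chilbert_space set" and A :: "'h \<Rightarrow> 'h"
  assumes sa: "selfadjoint_on D A"
begin

lemma A_minus_range_closed:
  assumes z: "Im z \<noteq> 0"
  shows "closed (A_minus A z ` D)"
  unfolding closed_sequential_limits
proof (intro allI impI, elim conjE)
  fix y l assume y: "\<forall>n. y n \<in> A_minus A z ` D" and "y \<longlonglongrightarrow> l"
  then have "\<forall>n. \<exists>\<psi>. \<psi> \<in> D \<and> y n = A_minus A z \<psi>"
    by blast
  then obtain \<psi> where \<psi>D: "\<And>n. \<psi> n \<in> D" and y_eq: "\<And>n. y n = A_minus A z (\<psi> n)"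
    by metis
  have "Cauchy \<psi>"
  proof (rule metric_CauchyI)
    fix \<epsilon> :: real assume "0 < \<epsilon>"
    then have "0 < \<epsilon> * \<bar>Im z\<bar>" using z by simp
    moreover have "Cauchy y" using \<open>y \<longlonglongrightarrow> l\<close> by (rule LIMSEQ_imp_Cauchy)
    ultimately obtain M where M: "\<And>m n. M \<le> m \<Longrightarrow> M \<le> n \<Longrightarrow> dist (y m) (y n) < \<epsilon> * \<bar>Im z\<bar>"
      unfolding Cauchy_def by meson
    have "dist (\<psi> m) (\<psi> n) < \<epsilon>" if "M \<le> m" "M \<le> n" for m n
    proof -
      have "\<bar>Im z\<bar> * norm (\<psi> m - \<psi> n) \<le> norm (A_minus A z (\<psi> m - \<psi> n))"
        by (rule A_minus_lower_bound[OF sa sa_dom_diff[OF sa \<psi>D \<psi>D]])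
      also have "\<dots> < \<epsilon> * \<bar>Im z\<bar>"
        using M[OF that] by (simp add: y_eq A_minus_diff[OF sa] \<psi>D dist_norm)
      finally show ?thesis using z by (simp add: dist_norm mult.commute)
    qed
    then show "\<exists>M. \<forall>m\<ge>M. \<forall>n\<ge>M. dist (\<psi> m) (\<psi> n) < \<epsilon>" by blast
  qed
  then obtain \<psi>0 where \<psi>0: "\<psi> \<longlonglongrightarrow> \<psi>0"
    using Cauchy_convergent_iff convergent_def by blast
  have "(\<lambda>n. y n + scaleC z (\<psi> n)) \<longlonglongrightarrow> l + scaleC z \<psi>0"
    by (intro tendsto_add \<open>y \<longlonglongrightarrow> l\<close> bounded_linear.tendsto[OF bounded_linear_scaleC \<psi>0])
  then have "\<psi>0 \<in> D \<and> A \<psi>0 = l + scaleC z \<psi>0"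
    using sa_closed_graph[OF sa \<psi>D \<psi>0] by (simp add: y_eq)
  then show "l \<in> A_minus A z ` D"
    by (auto intro!: image_eqI[where x=\<psi>0])
qed

text \<open>The range of \<open>A - z\<close> is closed, and a vector orthogonal to it lies in the domain of
  \<open>A\<^sup>* = A\<close> and is an eigenvector for the non-real eigenvalue \<open>cnj z\<close>, hence zero.\<close>
lemma A_minus_surj:
  assumes z: "Im z \<noteq> 0"
  shows "\<exists>\<psi>\<in>D. A_minus A z \<psi> = \<phi>"
proof -
  let ?U = "A_minus A z ` D"
  have lin: "u *\<^sub>R A_minus A z x + v *\<^sub>R A_minus A z y = A_minus A z (u *\<^sub>R x + v *\<^sub>R y)"
    if "x \<in> D" "y \<in> D" for u v x y
    using that by (simp add: A_minus_add[OF sa] A_minus_scaleR[OF sa] sa_dom_scaleR[OF sa])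
  have "convex ?U"
    unfolding convex_def by (auto simp: lin intro!: imageI sa_dom_add[OF sa] sa_dom_scaleR[OF sa])
  then obtain u where "u \<in> ?U" and min: "\<forall>w\<in>?U. norm (\<phi> - u) \<le> norm (\<phi> - w)"
    using best_approximation_exists A_minus_range_closed[OF z] sa_dom_0[OF sa] by blast
  then obtain \<psi>0 where \<psi>0: "\<psi>0 \<in> D" "u = A_minus A z \<psi>0"
    by blast
  define w where "w = \<phi> - u"
  have orth: "cinner (A_minus A z \<psi>) w = 0" if "\<psi> \<in> D" for \<psi>
    unfolding w_def
  proof (rule best_approximation_orthogonal[OF min])
    show "u + scaleC c (A_minus A z \<psi>) \<in> ?U" for c
      using that \<psi>0 by (auto simp: A_minus_add[OF sa] A_minus_scaleC[OF sa] sa_dom_add[OF sa]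
          sa_dom_scaleC[OF sa] intro!: image_eqI[where x="\<psi>0 + scaleC c \<psi>"])
  qed
  have adj: "cinner (A \<psi>) w = cinner \<psi> (scaleC (cnj z) w)" if "\<psi> \<in> D" for \<psi>
    using orth[OF that] by (simp add: cinner_diff_left cinner_scaleC_left cinner_scaleC_right)
  then have wD: "w \<in> D"
    by (rule sa_adjoint_dom[OF sa])
  have "\<forall>\<psi>\<in>D. cinner \<psi> (A w - scaleC (cnj z) w) = 0"
    using adj sa_symmetric[OF sa _ wD] by (simp add: cinner_diff_right)
  then have "A w - scaleC (cnj z) w = 0"
    by (rule dense_orthogonal_eq_0[OF sa_dom_dense[OF sa]])
  then have "Im (cinner (scaleC (cnj z) w) w) = 0"
    using sa_cinner_real[OF sa wD] by simp
  then have "Im z * (norm w)\<^sup>2 = 0"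
    by (simp add: cinner_scaleC_left cinner_self)
  then have "w = 0"
    using z by simp
  then show ?thesis
    using \<psi>0 by (intro bexI[of _ \<psi>0]) (simp_all add: w_def)
qed

lemma A_minus_inj:
  assumes z: "Im z \<noteq> 0" and xy: "x \<in> D" "y \<in> D" "A_minus A z x = A_minus A z y"
  shows "x = y"
proof -
  have "\<bar>Im z\<bar> * norm (x - y) \<le> norm (A_minus A z (x - y))"
    by (rule A_minus_lower_bound[OF sa sa_dom_diff[OF sa xy(1,2)]])
  also have "\<dots> = 0" using xy by (simp add: A_minus_diff[OF sa])
  finally show ?thesis using z by (simp add: mult_le_0_iff)
qed

lemma resolv_spec:
  assumes z: "Im z \<noteq> 0"
  shows "resolv D A z \<phi> \<in> D \<and> A_minus A z (resolv D A z \<phi>) = \<phi>"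
proof -
  have "\<exists>!\<psi>. \<psi> \<in> D \<and> A_minus A z \<psi> = \<phi>"
    using A_minus_surj[OF z, of \<phi>] A_minus_inj[OF z] by blast
  then show ?thesis unfolding resolv_def by (rule theI')
qed

lemma resolv_A_minus: "Im z \<noteq> 0 \<Longrightarrow> \<psi> \<in> D \<Longrightarrow> resolv D A z (A_minus A z \<psi>) = \<psi>"
  using resolv_spec A_minus_inj by blast

lemma resolv_bound: "Im z \<noteq> 0 \<Longrightarrow> \<bar>Im z\<bar> * norm (resolv D A z \<phi>) \<le> norm \<phi>"
  using A_minus_lower_bound[OF sa, of "resolv D A z \<phi>" z] resolv_spec by auto

lemma bounded_linear_resolv:
  assumes z: "Im z \<noteq> 0"
  shows "bounded_linear (resolv D A z)"
proof (rule bounded_linear_intro[where K="1 / \<bar>Im z\<bar>"])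
  show "resolv D A z (x + y) = resolv D A z x + resolv D A z y" for x y
    using resolv_A_minus[OF z, of "resolv D A z x + resolv D A z y"] resolv_spec[OF z, of x]
      resolv_spec[OF z, of y]
    by (simp add: A_minus_add[OF sa] sa_dom_add[OF sa])
  show "resolv D A z (r *\<^sub>R x) = r *\<^sub>R resolv D A z x" for r x
    using resolv_A_minus[OF z, of "r *\<^sub>R resolv D A z x"] resolv_spec[OF z, of x]
    by (simp add: A_minus_scaleR[OF sa] sa_dom_scaleR[OF sa])
  show "norm (resolv D A z x) \<le> norm x * (1 / \<bar>Im z\<bar>)" for x
    using resolv_bound[OF z, of x] z by (simp add: pos_le_divide_eq mult.commute)
qed

end

section \<open>Partial derivatives and \<open>C\<^sup>k\<^sub>b\<close> maps\<close>

lemma partial_eq: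
  "(f has_derivative f') (at x) \<Longrightarrow> partial f j x = f' (axis j 1)"
  unfolding partial_def using frechet_derivative_at by metis

lemma partial_bounded_linear:
  assumes L: "bounded_linear L" and f: "f differentiable (at x)"
  shows "partial (\<lambda>x. L (f x)) j x = L (partial f j x)"
  using partial_eq[OF bounded_linear.has_derivative[OF L f[unfolded frechet_derivative_works]], of j]
  by (simp add: partial_def)

lemma partial_add:
  assumes "f differentiable (at x)" and "g differentiable (at x)"
  shows "partial (\<lambda>x. f x + g x) j x = partial f j x + partial g j x"
  using partial_eq[OF has_derivative_add[OF assms[unfolded frechet_derivative_works]], of j]
  by (simp add: partial_def)

lemma partial_const: "partial (\<lambda>x. c) j x = 0"
proof -
  have "partial (\<lambda>x. c) j x = (\<lambda>h. 0) (axis j 1)"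
    by (rule partial_eq[OF has_derivative_const])
  then show ?thesis
    by simp
qed

lemma partial_bounded_bilinear:
  assumes bl: "bounded_bilinear bl" and "f differentiable (at x)" and "g differentiable (at x)"
  shows "partial (\<lambda>x. bl (f x) (g x)) j x = bl (partial f j x) (g x) + bl (f x) (partial g j x)"
  using partial_eq[OF bounded_bilinear.FDERIV[OF bl assms(2,3)[unfolded frechet_derivative_works]], of j]
  by (simp add: partial_def add.commute)

lemma differentiable_bounded_bilinear:
  assumes bl: "bounded_bilinear bl" and "f differentiable (at x)" and "g differentiable (at x)"
  shows "(\<lambda>x. bl (f x) (g x)) differentiable (at x)"
  using bounded_bilinear.FDERIV[OF bl assms(2,3)[unfolded frechet_derivative_works]]
  by (auto simp: differentiable_def)

lemma differentiable_bounded_linear: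
  assumes L: "bounded_linear L" and "f differentiable (at x)"
  shows "(\<lambda>x. L (f x)) differentiable (at x)"
  using bounded_linear.has_derivative[OF L assms(2)[unfolded frechet_derivative_works]]
  by (auto simp: differentiable_def)

lemma partial_sum_list:
  assumes "\<And>p. p \<in> set ps \<Longrightarrow> h p differentiable (at x)"
  shows "partial (\<lambda>x. \<Sum>p\<leftarrow>ps. h p x) j x = (\<Sum>p\<leftarrow>ps. partial (h p) j x)
     \<and> (\<lambda>x. \<Sum>p\<leftarrow>ps. h p x) differentiable (at x)"
  using assms
proof (induction ps)
  case Nil
  then show ?case by (simp add: partial_const)
next
  case (Cons p ps)
  then have "h p differentiable (at x)" "(\<lambda>x. \<Sum>p\<leftarrow>ps. h p x) differentiable (at x)"
    and "partial (\<lambda>x. \<Sum>p\<leftarrow>ps. h p x) j x = (\<Sum>p\<leftarrow>ps. partial (h p) j x)"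
    by auto
  then show ?case
    using partial_add[of "h p" x "\<lambda>x. \<Sum>p\<leftarrow>ps. h p x" j] by (auto intro: differentiable_add)
qed

lemma pderivs_snoc: "pderivs f (\<alpha> @ [j]) = pderivs (partial f j) \<alpha>"
  by (induction \<alpha>) auto

lemma Cb_continuous_on: "Cb k f \<Longrightarrow> continuous_on UNIV f"
  by (cases k) auto

lemma Cb_bounded: "Cb k f \<Longrightarrow> bounded (range f)"
  by (cases k) auto

lemma Cb_Suc_imp_Cb: "Cb (Suc k) f \<Longrightarrow> Cb k f"
proof (induction k arbitrary: f)
  case (Suc k)
  then have "continuous_on UNIV f" "bounded (range f)" "\<forall>x. f differentiable at x"
    "\<forall>j. Cb (Suc k) (partial f j)"
    unfolding Cb.simps(2)[of "Suc k"] by auto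
  then show ?case
    by (subst Cb.simps(2)) (use Suc.IH in blast)
qed simp

lemma Cb_le: "Cb k f \<Longrightarrow> l \<le> k \<Longrightarrow> Cb l f"
proof (induction k)
  case (Suc k)
  then show ?case
    by (cases "l = Suc k") (auto simp: Cb_Suc_imp_Cb)
qed simp

lemma Cb_const: "Cb k (\<lambda>x::real^'n. c)"
proof (induction k arbitrary: c)
  case (Suc k)
  have "partial (\<lambda>x::real^'n. c) j = (\<lambda>x. 0)" for j
    by (rule ext) (rule partial_const)
  then show ?case
    using Suc by simp
qed simp

lemma Cb_bounded_linear: "bounded_linear L \<Longrightarrow> Cb k f \<Longrightarrow> Cb k (\<lambda>x. L (f x))"
proof (induction k arbitrary: f)
  case 0
  then show ?case
    by (auto intro: bounded_linear.continuous_on bounded_linear_image[of "range f" L, simplified image_image])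
next
  case (Suc k)
  have "partial (\<lambda>x. L (f x)) j = (\<lambda>x. L (partial f j x))" for j
    using Suc.prems by (intro ext partial_bounded_linear) auto
  then show ?case
    using Suc
    by (auto intro: bounded_linear.continuous_on bounded_linear_image[of "range f" L, simplified image_image]
        differentiable_bounded_linear)
qed

lemma Cb_add: "Cb k f \<Longrightarrow> Cb k g \<Longrightarrow> Cb k (\<lambda>x. f x + g x)"
proof (induction k arbitrary: f g)
  case 0
  then show ?case
    by (auto intro!: continuous_on_add bounded_plus_comp)
next
  case (Suc k)
  have "partial (\<lambda>x. f x + g x) j = (\<lambda>x. partial f j x + partial g j x)" for j
    using Suc.prems by (intro ext partial_add) auto
  then show ?case
    using Suc by (auto intro!: continuous_on_add bounded_plus_comp differentiable_add)
qed

lemma bounded_range_bounded_bilinear: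
  assumes bl: "bounded_bilinear bl" and "bounded (range f)" and "bounded (range g)"
  shows "bounded (range (\<lambda>x. bl (f x) (g x)))"
proof -
  obtain Mf where Mf: "\<And>x. norm (f x) \<le> Mf"
    using assms(2) unfolding bounded_iff by blast
  obtain Mg where Mg: "\<And>x. norm (g x) \<le> Mg"
    using assms(3) unfolding bounded_iff by blast
  obtain K where K: "\<And>a b. norm (bl a b) \<le> norm a * norm b * K" "K \<ge> 0"
    using bounded_bilinear.nonneg_bounded[OF bl] by blast
  have "norm (bl (f x) (g x)) \<le> Mf * Mg * K" for x
  proof -
    have "norm (f x) * norm (g x) \<le> Mf * Mg"
      using Mf[of x] Mg[of x] by (intro mult_mono) (auto intro: order_trans[OF norm_ge_zero])
    then show ?thesis
      using K(1)[of "f x" "g x"] K(2) by (meson mult_right_mono order_trans)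
  qed
  then show ?thesis
    by (auto simp: bounded_iff)
qed

lemma Cb_bounded_bilinear:
  assumes bl: "bounded_bilinear bl"
  shows "Cb k f \<Longrightarrow> Cb k g \<Longrightarrow> Cb k (\<lambda>x. bl (f x) (g x))"
proof (induction k arbitrary: f g)
  case 0
  then show ?case
    by (auto intro!: bounded_range_bounded_bilinear[OF bl] bounded_bilinear.continuous_on[OF bl])
next
  case (Suc k)
  have "partial (\<lambda>x. bl (f x) (g x)) j = (\<lambda>x. bl (partial f j x) (g x) + bl (f x) (partial g j x))" for j
    using Suc.prems by (intro ext partial_bounded_bilinear[OF bl]) auto
  moreover have "Cb k (\<lambda>x. bl (partial f j x) (g x) + bl (f x) (partial g j x))" for j
    using Suc by (intro Cb_add Suc.IH) (auto intro: Cb_Suc_imp_Cb)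
  ultimately show ?case
    using Suc.prems
    by (auto intro!: bounded_range_bounded_bilinear[OF bl] bounded_bilinear.continuous_on[OF bl]
        differentiable_bounded_bilinear[OF bl])
qed

lemma Cb_sum: "finite S \<Longrightarrow> (\<And>i. i \<in> S \<Longrightarrow> Cb k (f i)) \<Longrightarrow> Cb k (\<lambda>x. \<Sum>i\<in>S. f i x)"
  by (induction S rule: finite_induct) (auto intro: Cb_add Cb_const)

lemma Cb_pderivs: "Cb k f \<Longrightarrow> length \<alpha> \<le> k \<Longrightarrow> Cb (k - length \<alpha>) (pderivs f \<alpha>)"
proof (induction \<alpha>)
  case (Cons j js)
  then have "Cb (Suc (k - length (j # js))) (pderivs f js)"
    by (simp add: Suc_diff_Suc)
  then show ?case
    by simp
qed simp

lemma differentiable_pderivs: "Cb k f \<Longrightarrow> length \<alpha> < k \<Longrightarrow> pderivs f \<alpha> differentiable (at x)"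
  using Cb_pderivs[of k f \<alpha>] by (cases "k - length \<alpha>") auto

lemma Cb_pderivs_bounded:
  fixes f :: "real^'n \<Rightarrow> 'b::real_normed_vector"
  assumes "Cb k f"
  shows "\<exists>M\<ge>0. \<forall>\<alpha> x. length \<alpha> \<le> k \<longrightarrow> norm (pderivs f \<alpha> x) \<le> M"
proof -
  let ?L = "{\<alpha> :: 'n list. set \<alpha> \<subseteq> UNIV \<and> length \<alpha> \<le> k}"
  have "finite ?L"
    by (rule finite_lists_length_le) simp
  moreover have "\<forall>\<alpha>\<in>?L. bounded (range (pderivs f \<alpha>))"
    using Cb_pderivs[OF assms] Cb_bounded by blast
  ultimately have "bounded (\<Union>\<alpha>\<in>?L. range (pderivs f \<alpha>))"
    by (rule bounded_UN)
  then obtain M where "\<forall>y\<in>(\<Union>\<alpha>\<in>?L. range (pderivs f \<alpha>)). norm y \<le> M"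
    by (auto simp: bounded_iff)
  then have "norm (pderivs f \<alpha> x) \<le> \<bar>M\<bar>" if "length \<alpha> \<le> k" for \<alpha> x
    using that by (auto intro: order_trans[OF _ abs_ge_self])
  then show ?thesis
    by (intro exI[of _ "\<bar>M\<bar>"]) simp
qed

lemma norm_sum_list_le:
  "(\<And>p. p \<in> set L \<Longrightarrow> norm (f p) \<le> c) \<Longrightarrow> norm (\<Sum>p\<leftarrow>L. f p) \<le> real (length L) * c"
proof (induction L)
  case (Cons a L)
  then have "norm (\<Sum>p\<leftarrow>a # L. f p) \<le> c + real (length L) * c"
    by (auto intro: order_trans[OF norm_triangle_ineq] add_mono)
  then show ?case
    by (simp add: algebra_simps)
qed simp

lemma Cb_pderivs_bounded_uniform:
  fixes f :: "'i::finite \<Rightarrow> real^'n \<Rightarrow> 'b::real_normed_vector"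
  assumes "\<And>i. Cb k (f i)"
  shows "\<exists>M\<ge>0. \<forall>i \<alpha> x. length \<alpha> \<le> k \<longrightarrow> norm (pderivs (f i) \<alpha> x) \<le> M"
proof -
  obtain M where M: "\<And>i. 0 \<le> M i" "\<And>i \<alpha> x. length \<alpha> \<le> k \<Longrightarrow> norm (pderivs (f i) \<alpha> x) \<le> M i"
    using Cb_pderivs_bounded[OF assms] by metis
  have "M i \<le> (\<Sum>i\<in>UNIV. M i)" for i
    using M(1) by (intro member_le_sum) auto
  then show ?thesis
    using M by (intro exI[of _ "\<Sum>i\<in>UNIV. M i"]) (meson order_trans sum_nonneg)
qed

lemma pderivs_bounded_linear:
  assumes L: "bounded_linear L" and f: "Cb k f" and "length \<alpha> \<le> k"
  shows "pderivs (\<lambda>x. L (f x)) \<alpha> = (\<lambda>x. L (pderivs f \<alpha> x))"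
  using \<open>length \<alpha> \<le> k\<close>
proof (induction \<alpha>)
  case (Cons j js)
  then show ?case
    by (auto intro!: ext partial_bounded_linear[OF L] differentiable_pderivs[OF f])
qed simp

text \<open>The ways of distributing the derivatives \<open>\<partial>\<^sup>\<alpha>\<close> over the two factors of a product.\<close>
fun index_splits :: "'n list \<Rightarrow> ('n list \<times> 'n list) list" where
  "index_splits [] = [([], [])]"
| "index_splits (j # js) =
     map (\<lambda>(b, c). (b, j # c)) (index_splits js) @ map (\<lambda>(b, c). (j # b, c)) (index_splits js)"

lemma index_splits_length_sum: "(b, c) \<in> set (index_splits \<alpha>) \<Longrightarrow> length b + length c = length \<alpha>"
  by (induction \<alpha> arbitrary: b c) auto

lemma length_index_splits: "length (index_splits \<alpha>) = 2 ^ length \<alpha>"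
  by (induction \<alpha>) auto

lemma index_splits_hd: "index_splits \<alpha> = ([], \<alpha>) # tl (index_splits \<alpha>)"
proof (induction \<alpha>)
  case (Cons j js)
  then obtain r where "index_splits js = ([], js) # r"
    by metis
  then show ?case
    by simp
qed simp

lemma index_splits_tl_length_sum:
  "(b, c) \<in> set (tl (index_splits \<alpha>)) \<Longrightarrow> length b + length c = length \<alpha>"
  using index_splits_hd[of \<alpha>] index_splits_length_sum by (metis list.set_intros(2))

lemma index_splits_tl: "(b, c) \<in> set (tl (index_splits \<alpha>)) \<Longrightarrow> b \<noteq> [] \<and> length c < length \<alpha>"
proof (induction \<alpha> arbitrary: b c)
  case (Cons j js)
  obtain r where r: "index_splits js = ([], js) # r"
    using index_splits_hd by metis
  have "tl (index_splits (j # js)) =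
      map (\<lambda>(b, c). (b, j # c)) r @ map (\<lambda>(b, c). (j # b, c)) (index_splits js)"
    by (simp add: r)
  with Cons.prems have "(b, c) \<in> set (map (\<lambda>(b, c). (b, j # c)) r) \<or>
      (b, c) \<in> set (map (\<lambda>(b, c). (j # b, c)) (index_splits js))"
    by auto
  then show ?case
  proof
    assume "(b, c) \<in> set (map (\<lambda>(b, c). (b, j # c)) r)"
    then obtain c' where "(b, c') \<in> set r" "c = j # c'"
      by auto
    then show ?thesis
      using Cons.IH[of b c'] r by simp
  qed (auto dest: index_splits_length_sum)
qed simp

lemma pderivs_bounded_bilinear:
  assumes bl: "bounded_bilinear bl" and f: "Cb k f" and g: "Cb k g" and "length \<alpha> \<le> k"
  shows "pderivs (\<lambda>x. bl (f x) (g x)) \<alpha> x =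
    (\<Sum>(b, c)\<leftarrow>index_splits \<alpha>. bl (pderivs f b x) (pderivs g c x))"
  using \<open>length \<alpha> \<le> k\<close>
proof (induction \<alpha> arbitrary: x)
  case (Cons j js)
  then have IH: "pderivs (\<lambda>x. bl (f x) (g x)) js =
      (\<lambda>x. \<Sum>(b, c)\<leftarrow>index_splits js. bl (pderivs f b x) (pderivs g c x))"
    by auto
  have diff: "pderivs f b differentiable (at y)" "pderivs g c differentiable (at y)"
    if "(b, c) \<in> set (index_splits js)" for b c y
    using index_splits_length_sum[OF that] Cons.prems by (auto intro!: differentiable_pderivs f g)
  have "pderivs (\<lambda>x. bl (f x) (g x)) (j # js) x =
     partial (\<lambda>x. \<Sum>p\<leftarrow>index_splits js. (case p of (b, c) \<Rightarrow> bl (pderivs f b x) (pderivs g c x))) j x"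
    by (simp add: IH case_prod_unfold)
  also have "\<dots> = (\<Sum>p\<leftarrow>index_splits js. partial (\<lambda>x. case p of (b, c) \<Rightarrow> bl (pderivs f b x) (pderivs g c x)) j x)"
    by (rule conjunct1[OF partial_sum_list]) (auto intro!: differentiable_bounded_bilinear[OF bl] diff)
  also have "\<dots> = (\<Sum>p\<leftarrow>index_splits js. (case p of (b, c) \<Rightarrow> bl (pderivs f b x) (pderivs g (j # c) x))
                   + (case p of (b, c) \<Rightarrow> bl (pderivs f (j # b) x) (pderivs g c x)))"
    by (intro arg_cong[where f=sum_list] map_cong refl)
       (auto simp: partial_bounded_bilinear[OF bl] diff add.commute)
  also have "\<dots> = (\<Sum>(b, c)\<leftarrow>index_splits (j # js). bl (pderivs f b x) (pderivs g c x))"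
    by (simp add: sum_list_addf comp_def case_prod_unfold)
  finally show ?case .
qed simp

lemma blinfun_inverse_diff:
  assumes "Q y o\<^sub>L K y = id_blinfun" and "K x o\<^sub>L Q x = id_blinfun"
  shows "Q y - Q x = - (Q y o\<^sub>L (K y - K x) o\<^sub>L Q x)"
proof (rule blinfun_eqI)
  fix v
  have "K x (Q x v) = v" "Q y (K y w) = w" for w
    using assms by (metis blinfun_apply_blinfun_compose id_blinfun.rep_eq id_apply)+
  then show "blinfun_apply (Q y - Q x) v = blinfun_apply (- (Q y o\<^sub>L (K y - K x) o\<^sub>L Q x)) v"
    by (simp add: uminus_blinfun.rep_eq minus_blinfun.rep_eq blinfun.diff_right)
qed

lemma norm_blinfun_compose3_le:
  assumes "norm a \<le> A" and "norm b \<le> B" and "norm c \<le> C"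
  shows "norm (a o\<^sub>L b o\<^sub>L c) \<le> A * B * C"
proof -
  have "norm (a o\<^sub>L b o\<^sub>L c) \<le> norm a * norm b * norm c"
    by (meson mult_right_mono norm_blinfun_compose norm_ge_zero order_trans)
  also have "\<dots> \<le> A * B * C"
    using assms by (intro mult_mono mult_nonneg_nonneg) (auto intro: order_trans[OF norm_ge_zero])
  finally show ?thesis .
qed

context
  fixes K Q :: "'x::real_normed_vector \<Rightarrow> ('a::real_normed_vector \<Rightarrow>\<^sub>L 'a)" and N :: real
  assumes QK: "\<And>x. Q x o\<^sub>L K x = id_blinfun" and KQ: "\<And>x. K x o\<^sub>L Q x = id_blinfun"
    and Q_bound: "\<And>x. norm (Q x) \<le> N"
begin

lemma norm_blinfun_inverse_diff_le: "norm (Q y - Q x) \<le> N * norm (K y - K x) * N"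
  unfolding blinfun_inverse_diff[where Q=Q and K=K and y=y and x=x, OF QK KQ] norm_minus_cancel
  by (intro norm_blinfun_compose3_le Q_bound order_refl)

lemma isCont_blinfun_inverse:
  assumes "isCont K x"
  shows "isCont Q x"
proof -
  have "(K \<longlongrightarrow> K x) (at x)"
    using assms by (simp add: isCont_def)
  then have "((\<lambda>y. N * norm (K y - K x) * N) \<longlongrightarrow> N * norm (K x - K x) * N) (at x)"
    by (intro tendsto_intros)
  then have "((\<lambda>y. N * norm (K y - K x) * N) \<longlongrightarrow> 0) (at x)"
    by simp
  then have "((\<lambda>y. Q y - Q x) \<longlongrightarrow> 0) (at x)"
    by (rule Lim_null_comparison[OF always_eventually, rotated]) (intro allI norm_blinfun_inverse_diff_le)
  then show ?thesis
    by (simp add: isCont_def LIM_zero_iff)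
qed

text \<open>With \<open>R y = K y - K x - K' (y - x)\<close>, the identity
  \<open>Q y - Q x + Q x K'(y - x) Q x = - Q y R y Q x - (Q y - Q x) K'(y - x) Q x\<close>
  bounds the remainder of \<open>Q\<close> by that of \<open>K\<close> plus a term that vanishes by continuity.\<close>
lemma has_derivative_blinfun_inverse:
  assumes K': "(K has_derivative K') (at x)"
  shows "(Q has_derivative (\<lambda>h. - (Q x o\<^sub>L K' h o\<^sub>L Q x))) (at x)"
  unfolding has_derivative_iff_norm
proof
  have "bounded_linear K'"
    using K' by (rule has_derivative_bounded_linear)
  then obtain B where B: "\<And>h. norm (K' h) \<le> norm h * B" "0 < B"
    using bounded_linear.pos_bounded by blast
  show "bounded_linear (\<lambda>h. - (Q x o\<^sub>L K' h o\<^sub>L Q x))"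
    using \<open>bounded_linear K'\<close> by (intro bounded_linear_minus bounded_linear_compose[OF
        bounded_bilinear.bounded_linear_left[OF bounded_bilinear_blinfun_compose]]
        bounded_linear_compose[OF bounded_bilinear.bounded_linear_right[OF bounded_bilinear_blinfun_compose]])
  define R where "R y = K y - K x - K' (y - x)" for y
  have R: "((\<lambda>y. norm (R y) / norm (y - x)) \<longlongrightarrow> 0) (at x)"
    using K' unfolding has_derivative_iff_norm R_def by blast
  have "isCont Q x"
    using K' by (intro isCont_blinfun_inverse has_derivative_continuous)
  then have "((\<lambda>y. norm (Q y - Q x)) \<longlongrightarrow> 0) (at x)"
    by (simp add: isCont_def tendsto_norm_zero_iff LIM_zero_iff)
  then have "((\<lambda>y. N * N * (norm (R y) / norm (y - x)) + norm (Q y - Q x) * B * N)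
      \<longlongrightarrow> N * N * 0 + 0 * B * N) (at x)"
    using R by (intro tendsto_add tendsto_mult_left tendsto_mult_right)
  then have lim: "((\<lambda>y. N * N * (norm (R y) / norm (y - x)) + norm (Q y - Q x) * B * N) \<longlongrightarrow> 0) (at x)"
    by simp
  have "norm (Q y - Q x - - (Q x o\<^sub>L K' (y - x) o\<^sub>L Q x)) / norm (y - x) \<le>
      N * N * (norm (R y) / norm (y - x)) + norm (Q y - Q x) * B * N" for y
  proof -
    have "Q y - Q x - - (Q x o\<^sub>L K' (y - x) o\<^sub>L Q x) =
        - (Q y o\<^sub>L R y o\<^sub>L Q x) - ((Q y - Q x) o\<^sub>L K' (y - x) o\<^sub>L Q x)"
    proof (rule blinfun_eqI)
      fix v
      have "K x (Q x v) = v" "Q y (K y w) = w" for w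
        using KQ QK by (metis blinfun_apply_blinfun_compose id_blinfun.rep_eq id_apply)+
      then show "blinfun_apply (Q y - Q x - - (Q x o\<^sub>L K' (y - x) o\<^sub>L Q x)) v =
          blinfun_apply (- (Q y o\<^sub>L R y o\<^sub>L Q x) - ((Q y - Q x) o\<^sub>L K' (y - x) o\<^sub>L Q x)) v"
        by (simp add: R_def uminus_blinfun.rep_eq minus_blinfun.rep_eq plus_blinfun.rep_eq blinfun.diff_right)
    qed
    then have "norm (Q y - Q x - - (Q x o\<^sub>L K' (y - x) o\<^sub>L Q x)) \<le>
        N * norm (R y) * N + norm (Q y - Q x) * (norm (y - x) * B) * N"
      by (metis (no_types, lifting) B(1) Q_bound norm_blinfun_compose3_le norm_minus_cancel
          norm_triangle_le_diff order_refl add_mono)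
    then show ?thesis
      by (cases "y = x") (simp_all add: field_simps)
  qed
  then show "((\<lambda>y. norm (Q y - Q x - - (Q x o\<^sub>L K' (y - x) o\<^sub>L Q x)) / norm (y - x)) \<longlongrightarrow> 0) (at x)"
    by (intro Lim_null_comparison[OF always_eventually lim]) auto
qed

end

lemma Cb_blinfun_inverse:
  fixes K Q :: "real^'n \<Rightarrow> ('a::real_normed_vector \<Rightarrow>\<^sub>L 'a)"
  assumes QK: "\<And>x. Q x o\<^sub>L K x = id_blinfun" and KQ: "\<And>x. K x o\<^sub>L Q x = id_blinfun"
    and Q_bound: "\<And>x. norm (Q x) \<le> N" and K: "Cb k K"
  shows "Cb k Q"
proof -
  have "continuous_on UNIV Q"
    using Cb_continuous_on[OF K]
    by (auto simp: continuous_on_eq_continuous_at intro: isCont_blinfun_inverse[OF QK KQ Q_bound])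
  moreover have "bounded (range Q)"
    using Q_bound by (auto simp: bounded_iff)
  ultimately have base: "Cb 0 Q"
    by simp
  have "Cb l Q" if "l \<le> k" for l
    using that
  proof (induction l)
    case (Suc l)
    then have K: "Cb (Suc l) K"
      using Cb_le[OF K] by blast
    have Q': "(Q has_derivative (\<lambda>h. - (Q x o\<^sub>L frechet_derivative K (at x) h o\<^sub>L Q x))) (at x)" for x
      using K by (intro has_derivative_blinfun_inverse[OF QK KQ Q_bound]) (simp add: frechet_derivative_works)
    have "partial Q j x = - (Q x o\<^sub>L partial K j x o\<^sub>L Q x)" for j x
      using partial_eq[OF Q'[of x], of j] by (simp add: partial_def)
    then have "partial Q j = (\<lambda>x. - (Q x o\<^sub>L partial K j x o\<^sub>L Q x))" for j
      by blast
    moreover have "Cb l (\<lambda>x. - (Q x o\<^sub>L partial K j x o\<^sub>L Q x))" for j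
      using Suc K
      by (intro Cb_bounded_linear[OF bounded_linear_minus[OF bounded_linear_ident]]
          Cb_bounded_bilinear[OF bounded_bilinear_blinfun_compose]) auto
    ultimately show ?case
      using base Q' by (auto simp: differentiable_def)
  qed (use base in simp)
  then show ?thesis
    by simp
qed

section \<open>The resolvent family\<close>

definition scaleC_blinfun :: "complex \<Rightarrow> ('h::complex_inner \<Rightarrow>\<^sub>L 'h) \<Rightarrow> ('h \<Rightarrow>\<^sub>L 'h)" where
  "scaleC_blinfun c X = Blinfun (\<lambda>\<phi>. scaleC c (X \<phi>))"

lemma scaleC_blinfun_apply: "blinfun_apply (scaleC_blinfun c X) \<phi> = scaleC c (X \<phi>)"
  unfolding scaleC_blinfun_def
  by (rule bounded_linear_Blinfun_apply[THEN fun_cong])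
     (rule bounded_linear_compose[OF bounded_linear_scaleC blinfun.bounded_linear_right])

lemma scaleC_blinfun_of_real: "scaleC_blinfun (complex_of_real r) X = r *\<^sub>R X"
  by (rule blinfun_eqI) (simp add: scaleC_blinfun_apply scaleC_of_real scaleR_blinfun.rep_eq)

lemma scaleC_blinfun_diff_left: "scaleC_blinfun (a - b) X = scaleC_blinfun a X - scaleC_blinfun b X"
  by (rule blinfun_eqI) (simp add: scaleC_blinfun_apply scaleC_diff_left minus_blinfun.rep_eq)

lemma norm_scaleC_blinfun_le: "norm (scaleC_blinfun c X) \<le> cmod c * norm X"
  by (rule norm_blinfun_bound)
     (auto simp: scaleC_blinfun_apply norm_scaleC mult.assoc intro!: mult_left_mono norm_blinfun)

lemma blinfun_compose_assoc: "(a o\<^sub>L b) o\<^sub>L c = a o\<^sub>L (b o\<^sub>L c)"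
  by (rule blinfun_eqI) simp

lemma blinfun_compose_id_left [simp]: "id_blinfun o\<^sub>L a = a"
  by (rule blinfun_eqI) simp

lemma norm_vec_le_sum: "norm (x :: 'a::real_normed_vector ^'n) \<le> (\<Sum>i\<in>UNIV. norm (x $ i))"
  unfolding norm_vec_def by (rule L2_set_le_sum) simp

lemma bounded_linear_axis: "bounded_linear (axis k :: 'a::real_normed_vector \<Rightarrow> 'a^'n)"
proof (rule bounded_linear_intro[where K=1])
  show "axis k (x + y) = axis k x + axis k y" for x y :: 'a
    by (simp add: axis_def vec_eq_iff)
  show "axis k (r *\<^sub>R x) = r *\<^sub>R axis k x" for r and x :: 'a
    by (simp add: axis_def vec_eq_iff)
  show "norm (axis k x :: 'a^'n) \<le> norm x * 1" for x :: 'a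
    using norm_vec_le_sum[of "axis k x :: 'a^'n"]
    by (simp add: axis_def if_distrib sum.delta cong: if_cong)
qed

lemma vec_lambda_eq_sum_axis: "(\<chi> k. f k) = (\<Sum>k\<in>UNIV. axis k (f k))"
  by (simp add: vec_eq_iff axis_def sum_component if_distrib sum.delta cong: if_cong)

lemma tuple_bound_D_mono: "tuple_bound_D Y A F c \<Longrightarrow> c \<le> c' \<Longrightarrow> tuple_bound_D Y A F c'"
  unfolding tuple_bound_D_def by (meson mult_right_mono norm_ge_zero order_trans)

lemma Im_spec_pt [simp]: "Im (spec_pt E \<delta> x) = - \<delta>"
  by (simp add: spec_pt_def)

lemma norm_spec_pt_le: "cmod (spec_pt E \<delta> x) \<le> \<bar>E x\<bar> + \<bar>\<delta>\<bar>"
  using norm_triangle_ineq4[of "complex_of_real (E x)" "\<i> * complex_of_real \<delta>"]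
  by (simp add: spec_pt_def norm_mult)

text \<open>The hypothesis \<open>CbD\<close> provides \<open>G(x) = H\<^sub>0(x) S\<close>, where \<open>S = T\<^sup>-\<^sup>1\<close> and \<open>T = H\<^sub>0(x\<^sub>0) - i\<close>.
  Hence \<open>K\<^sub>\<delta>(x) = (H\<^sub>0(x) - z) S = G(x) - z S\<close> is as regular as \<open>G\<close> and \<open>E\<close>, and its inverse is
  \<open>Q\<^sub>\<delta>(x) = T R\<^sub>\<delta>(x)\<close>.\<close>
locale resolvent_family =
  fixes D :: "'h::chilbert_space set" and H0 :: "real^'n \<Rightarrow> 'h \<Rightarrow> 'h" and E :: "real^'n \<Rightarrow> real"
    and x0 :: "real^'n" and C1 :: real and G :: "real^'n \<Rightarrow> ('h \<Rightarrow>\<^sub>L 'h)"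
    and P :: "real^'n \<Rightarrow> ('h \<Rightarrow>\<^sub>L 'h)" and m :: nat
  assumes sa: "\<And>x. selfadjoint_on D (H0 x)" and C1: "0 < C1"
    and graph_norm_equiv: "\<And>x \<psi>. \<psi> \<in> D \<Longrightarrow> C1 * gnorm (H0 x0) \<psi> \<le> gnorm (H0 x) \<psi>"
    and G: "\<And>x \<psi>. \<psi> \<in> D \<Longrightarrow> G x (H0 x0 \<psi> - scaleC \<i> \<psi>) = H0 x \<psi>"
    and Cb_G: "Cb m G" and P_idem: "\<And>x. P x o\<^sub>L P x = P x"
    and Cb_P: "Cb (Suc m) P" and Cb_E: "Cb m E"
begin

definition "R \<delta> x = resolv D (H0 x) (spec_pt E \<delta> x)"
definition "T \<psi> = H0 x0 \<psi> - scaleC \<i> \<psi>"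
definition "S = Blinfun (resolv D (H0 x0) \<i>)"
definition "Q \<delta> x = Blinfun (\<lambda>\<phi>. T (R \<delta> x \<phi>))"
definition "K \<delta> x = G x - scaleC_blinfun (spec_pt E \<delta> x) S"
definition "K0 x = G x - E x *\<^sub>R S"
definition "B k x = partial P k x o\<^sub>L P x"
definition "QB \<delta> k x = Q \<delta> x o\<^sub>L B k x"

lemma R_spec: "\<delta> \<noteq> 0 \<Longrightarrow> R \<delta> x \<phi> \<in> D \<and> H0 x (R \<delta> x \<phi>) - scaleC (spec_pt E \<delta> x) (R \<delta> x \<phi>) = \<phi>"
  unfolding R_def by (rule resolv_spec[OF sa]) simp

lemma bounded_linear_R: "\<delta> \<noteq> 0 \<Longrightarrow> bounded_linear (R \<delta> x)"
  unfolding R_def by (rule bounded_linear_resolv[OF sa]) simp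

lemma norm_R_le: "\<delta> \<noteq> 0 \<Longrightarrow> \<bar>\<delta>\<bar> * norm (R \<delta> x \<phi>) \<le> norm \<phi>"
  unfolding R_def using resolv_bound[OF sa, of "spec_pt E \<delta> x" x \<phi>] by simp

lemma S_apply: "S \<phi> = resolv D (H0 x0) \<i> \<phi>"
  unfolding S_def using bounded_linear_Blinfun_apply[OF bounded_linear_resolv[OF sa]] by simp

lemma S_spec: "S \<phi> \<in> D \<and> T (S \<phi>) = \<phi>"
  unfolding S_apply T_def by (rule resolv_spec[OF sa]) simp

lemma S_T: "\<psi> \<in> D \<Longrightarrow> S (T \<psi>) = \<psi>"
  unfolding S_apply T_def by (rule resolv_A_minus[OF sa]) simp_all

lemma norm_S_le: "norm S \<le> 1"
  by (rule norm_blinfun_bound) (use resolv_bound[OF sa, of \<i> x0] in \<open>simp_all add: S_apply\<close>)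

lemma T_add: "x \<in> D \<Longrightarrow> y \<in> D \<Longrightarrow> T (x + y) = T x + T y"
  unfolding T_def by (simp add: sa_add[OF sa] scaleC_add_right)

lemma T_scaleR: "x \<in> D \<Longrightarrow> T (r *\<^sub>R x) = r *\<^sub>R T x"
  unfolding T_def by (simp add: sa_scaleR[OF sa] scaleC_scaleR scaleR_diff_right)

lemma norm_T_le_gnorm: "\<psi> \<in> D \<Longrightarrow> C1 * norm (T \<psi>) \<le> gnorm (H0 x) \<psi>"
proof -
  assume \<psi>: "\<psi> \<in> D"
  have "norm (T \<psi>) \<le> gnorm (H0 x0) \<psi>"
    using norm_triangle_ineq4[of "H0 x0 \<psi>" "scaleC \<i> \<psi>"] by (simp add: T_def gnorm_def norm_scaleC)
  then have "C1 * norm (T \<psi>) \<le> C1 * gnorm (H0 x0) \<psi>"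
    using C1 by simp
  also have "\<dots> \<le> gnorm (H0 x) \<psi>"
    using graph_norm_equiv[OF \<psi>] .
  finally show ?thesis .
qed

lemma gnorm_R_le:
  assumes "\<delta> \<noteq> 0"
  shows "gnorm (H0 x) (R \<delta> x \<phi>) \<le> norm \<phi> + (cmod (spec_pt E \<delta> x) + 1) * norm (R \<delta> x \<phi>)"
proof -
  have "H0 x (R \<delta> x \<phi>) = \<phi> + scaleC (spec_pt E \<delta> x) (R \<delta> x \<phi>)"
    using R_spec[OF assms, of x \<phi>] by (simp add: algebra_simps)
  then show ?thesis
    using norm_triangle_ineq[of \<phi> "scaleC (spec_pt E \<delta> x) (R \<delta> x \<phi>)"]
    by (simp add: gnorm_def norm_scaleC algebra_simps)
qed

lemma bounded_linear_T_R:
  assumes "\<delta> \<noteq> 0"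
  shows "bounded_linear (\<lambda>\<phi>. T (R \<delta> x \<phi>))"
proof -
  interpret bounded_linear "R \<delta> x"
    by (rule bounded_linear_R[OF assms])
  obtain c where c: "\<And>\<phi>. norm (R \<delta> x \<phi>) \<le> norm \<phi> * c" "0 \<le> c"
    using nonneg_bounded by blast
  let ?K = "(1 + (cmod (spec_pt E \<delta> x) + 1) * c) / C1"
  show ?thesis
  proof (rule bounded_linear_intro[where K="?K"])
    show "T (R \<delta> x (a + b)) = T (R \<delta> x a) + T (R \<delta> x b)" for a b
      by (simp add: add T_add R_spec[OF assms])
    show "T (R \<delta> x (r *\<^sub>R a)) = r *\<^sub>R T (R \<delta> x a)" for r a
      by (simp add: scaleR T_scaleR R_spec[OF assms])
    show "norm (T (R \<delta> x a)) \<le> norm a * ?K" for a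
    proof -
      have "C1 * norm (T (R \<delta> x a)) \<le> norm a + (cmod (spec_pt E \<delta> x) + 1) * (norm a * c)"
        using norm_T_le_gnorm[of "R \<delta> x a" x] gnorm_R_le[OF assms, of x a] R_spec[OF assms, of x a]
          mult_left_mono[OF c(1)[of a], of "cmod (spec_pt E \<delta> x) + 1"]
        by simp
      then show ?thesis
        using C1 by (simp add: field_simps)
    qed
  qed
qed

lemma Q_apply: "\<delta> \<noteq> 0 \<Longrightarrow> Q \<delta> x \<phi> = T (R \<delta> x \<phi>)"
  unfolding Q_def using bounded_linear_Blinfun_apply[OF bounded_linear_T_R] by simp

lemma S_Q_apply: "\<delta> \<noteq> 0 \<Longrightarrow> S (Q \<delta> x \<phi>) = R \<delta> x \<phi>"
  by (simp add: Q_apply S_T R_spec)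

lemma RB_eq: "\<delta> \<noteq> 0 \<Longrightarrow> RB D H0 E \<delta> x X = S o\<^sub>L Q \<delta> x o\<^sub>L X"
proof -
  assume d: "\<delta> \<noteq> 0"
  have "bounded_linear (\<lambda>\<phi>. R \<delta> x (X \<phi>))"
    using bounded_linear_compose[OF bounded_linear_R[OF d] blinfun.bounded_linear_right] .
  then show ?thesis
    unfolding RB_def R_def[symmetric]
    by (intro blinfun_eqI) (simp add: bounded_linear_Blinfun_apply S_Q_apply[OF d])
qed

lemma RB_apply: "\<delta> \<noteq> 0 \<Longrightarrow> RB D H0 E \<delta> x X \<psi> = R \<delta> x (X \<psi>)"
  by (simp add: RB_eq S_Q_apply)

lemma K_Q: "\<delta> \<noteq> 0 \<Longrightarrow> K \<delta> x o\<^sub>L Q \<delta> x = id_blinfun"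
proof (rule blinfun_eqI)
  fix \<phi> assume d: "\<delta> \<noteq> 0"
  have "G x (Q \<delta> x \<phi>) = H0 x (R \<delta> x \<phi>)"
    using G R_spec[OF d] by (simp add: Q_apply[OF d] T_def)
  then show "(K \<delta> x o\<^sub>L Q \<delta> x) \<phi> = id_blinfun \<phi>"
    using R_spec[OF d, of x \<phi>]
    by (simp add: K_def minus_blinfun.rep_eq scaleC_blinfun_apply S_Q_apply[OF d])
qed

lemma Q_K: "\<delta> \<noteq> 0 \<Longrightarrow> Q \<delta> x o\<^sub>L K \<delta> x = id_blinfun"
proof (rule blinfun_eqI)
  fix \<phi> assume d: "\<delta> \<noteq> 0"
  let ?\<psi> = "S \<phi>"
  have \<psi>: "?\<psi> \<in> D" "T ?\<psi> = \<phi>"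
    using S_spec by auto
  then have "K \<delta> x \<phi> = H0 x ?\<psi> - scaleC (spec_pt E \<delta> x) ?\<psi>"
    using G[of ?\<psi> x] by (simp add: K_def minus_blinfun.rep_eq scaleC_blinfun_apply T_def)
  moreover have "R \<delta> x (H0 x ?\<psi> - scaleC (spec_pt E \<delta> x) ?\<psi>) = ?\<psi>"
    unfolding R_def by (rule resolv_A_minus[OF sa]) (simp_all add: d \<psi>)
  ultimately show "(Q \<delta> x o\<^sub>L K \<delta> x) \<phi> = id_blinfun \<phi>"
    by (simp add: Q_apply[OF d] \<psi>)
qed

definition "E_sup = (SOME M. \<forall>x. \<bar>E x\<bar> \<le> M)"

lemma abs_E_le: "\<bar>E x\<bar> \<le> E_sup"
proof -
  obtain M where "\<forall>x. \<bar>E x\<bar> \<le> M"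
    using Cb_bounded[OF Cb_E] by (auto simp: bounded_iff)
  then have "\<forall>x. \<bar>E x\<bar> \<le> E_sup"
    unfolding E_sup_def by (rule someI)
  then show ?thesis
    by blast
qed

lemma E_sup_nonneg: "0 \<le> E_sup"
  using abs_E_le[of undefined] by linarith

lemma norm_spec_pt_le_E_sup: "0 < \<delta> \<Longrightarrow> cmod (spec_pt E \<delta> x) + 1 \<le> E_sup + \<delta> + 1"
  using norm_spec_pt_le[of E \<delta> x] abs_E_le[of x] by simp

text \<open>The graph norm of \<open>H\<^sub>0(x)\<close> on the range of \<open>R\<^sub>\<delta>(x)\<close> controls \<open>Q\<^sub>\<delta>(x) = T R\<^sub>\<delta>(x)\<close>.\<close>
lemma norm_Q_apply_le:
  assumes "0 < \<delta>"
  shows "C1 * norm (Q \<delta> x \<phi>) \<le> norm \<phi> + (E_sup + \<delta> + 1) * norm (R \<delta> x \<phi>)"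
proof -
  have "C1 * norm (Q \<delta> x \<phi>) \<le> gnorm (H0 x) (R \<delta> x \<phi>)"
    using assms norm_T_le_gnorm R_spec by (simp add: Q_apply)
  also have "\<dots> \<le> norm \<phi> + (cmod (spec_pt E \<delta> x) + 1) * norm (R \<delta> x \<phi>)"
    using assms by (simp add: gnorm_R_le)
  also have "\<dots> \<le> norm \<phi> + (E_sup + \<delta> + 1) * norm (R \<delta> x \<phi>)"
    using assms norm_spec_pt_le_E_sup by (simp add: mult_right_mono)
  finally show ?thesis .
qed

lemma norm_Q_le:
  assumes "0 < \<delta>"
  shows "norm (Q \<delta> x) \<le> (1 + (E_sup + \<delta> + 1) / \<delta>) / C1"
proof (rule norm_blinfun_bound)
  show "0 \<le> (1 + (E_sup + \<delta> + 1) / \<delta>) / C1"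
    using C1 assms E_sup_nonneg by simp
  fix \<phi>
  have "norm (R \<delta> x \<phi>) \<le> norm \<phi> / \<delta>"
    using norm_R_le[of \<delta> x \<phi>] assms by (simp add: field_simps)
  then have "(E_sup + \<delta> + 1) * norm (R \<delta> x \<phi>) \<le> (E_sup + \<delta> + 1) * (norm \<phi> / \<delta>)"
    using assms E_sup_nonneg by (intro mult_left_mono) auto
  then have "C1 * norm (Q \<delta> x \<phi>) \<le> norm \<phi> + (E_sup + \<delta> + 1) * (norm \<phi> / \<delta>)"
    using norm_Q_apply_le[OF assms, of x \<phi>] by linarith
  then show "norm (Q \<delta> x \<phi>) \<le> (1 + (E_sup + \<delta> + 1) / \<delta>) / C1 * norm \<phi>"
    using C1 assms by (simp add: field_simps)
qed

lemma norm_Q_compose_le: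
  assumes "0 < \<delta>"
  shows "C1 * norm (Q \<delta> x o\<^sub>L X) \<le> norm X + (E_sup + \<delta> + 1) * norm (S o\<^sub>L Q \<delta> x o\<^sub>L X)"
proof -
  let ?b = "(norm X + (E_sup + \<delta> + 1) * norm (S o\<^sub>L Q \<delta> x o\<^sub>L X)) / C1"
  have "norm (Q \<delta> x o\<^sub>L X) \<le> ?b"
  proof (rule norm_blinfun_bound)
    show "0 \<le> ?b"
      using C1 assms E_sup_nonneg by simp
    fix \<phi>
    have "C1 * norm (Q \<delta> x (X \<phi>)) \<le> norm (X \<phi>) + (E_sup + \<delta> + 1) * norm ((S o\<^sub>L Q \<delta> x o\<^sub>L X) \<phi>)"
      using norm_Q_apply_le[OF assms] assms by (simp add: S_Q_apply)
    also have "\<dots> \<le> norm X * norm \<phi> + (E_sup + \<delta> + 1) * (norm (S o\<^sub>L Q \<delta> x o\<^sub>L X) * norm \<phi>)"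
      using assms E_sup_nonneg by (intro add_mono mult_left_mono norm_blinfun) auto
    finally show "norm ((Q \<delta> x o\<^sub>L X) \<phi>) \<le> ?b * norm \<phi>"
      using C1 by (simp add: field_simps)
  qed
  then show ?thesis
    using C1 by (simp add: field_simps)
qed

lemma P_partial_P_P: "P x o\<^sub>L partial P k x o\<^sub>L P x = 0"
proof -
  have P_diff: "P differentiable (at x)"
    using Cb_P by simp
  have "partial P k x = partial (\<lambda>x. P x o\<^sub>L P x) k x"
    by (simp add: P_idem)
  also have "\<dots> = (partial P k x o\<^sub>L P x) + (P x o\<^sub>L partial P k x)"
    by (rule partial_bounded_bilinear[OF bounded_bilinear_blinfun_compose P_diff P_diff])
  finally have "partial P k x w = partial P k x (P x w) + P x (partial P k x w)" for w
    by (metis blinfun_apply_blinfun_compose plus_blinfun.rep_eq)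
  moreover have "P x (P x v) = P x v" for v
    using P_idem by (metis blinfun_apply_blinfun_compose)
  ultimately show ?thesis
    by (intro blinfun_eqI) (metis add_cancel_right_right blinfun_apply_blinfun_compose zero_blinfun.rep_eq)
qed

lemma B_eq: "(id_blinfun - P x) o\<^sub>L partial P k x o\<^sub>L P x = B k x"
proof (rule blinfun_eqI)
  fix v
  have "P x (partial P k x (P x v)) = 0"
    using P_partial_P_P[of x k] by (metis blinfun_apply_blinfun_compose zero_blinfun.rep_eq)
  then show "((id_blinfun - P x) o\<^sub>L partial P k x o\<^sub>L P x) v = B k x v"
    by (simp add: B_def minus_blinfun.rep_eq)
qed

lemma Fdelta_nth: "\<delta> \<noteq> 0 \<Longrightarrow> Fdelta D H0 E P \<delta> x $ k = S o\<^sub>L QB \<delta> k x"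
  by (simp add: Fdelta_def B_eq RB_eq QB_def) (simp add: blinfun_compose_assoc)

lemma RdPP_eq: "\<delta> \<noteq> 0 \<Longrightarrow> RdPP D H0 E P \<delta> k x = S o\<^sub>L QB \<delta> k x"
  by (simp add: RdPP_def RB_eq QB_def B_def blinfun_compose_assoc)

lemma Cb_B: "Cb m (B k)"
  unfolding B_def[abs_def] using Cb_P Cb_Suc_imp_Cb[OF Cb_P]
  by (intro Cb_bounded_bilinear[OF bounded_bilinear_blinfun_compose]) simp_all

lemma Cb_K0: "Cb m K0"
proof -
  have "Cb m (\<lambda>x. - (E x *\<^sub>R S))"
    by (intro Cb_bounded_linear[OF bounded_linear_minus[OF bounded_linear_ident]]
        Cb_bounded_linear[OF bounded_linear_scaleR_left] Cb_E)
  from Cb_add[OF Cb_G this] show ?thesis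
    unfolding K0_def[abs_def] by simp
qed

lemma K_eq: "K \<delta> x = K0 x + scaleC_blinfun (\<i> * complex_of_real \<delta>) S"
  by (simp add: K_def K0_def spec_pt_def scaleC_blinfun_diff_left scaleC_blinfun_of_real)

lemma Cb_K: "Cb m (K \<delta>)"
  unfolding K_eq[abs_def] by (rule Cb_add[OF Cb_K0 Cb_const])

lemma Cb_Q: "0 < \<delta> \<Longrightarrow> Cb m (Q \<delta>)"
  by (rule Cb_blinfun_inverse[OF Q_K K_Q norm_Q_le Cb_K]) auto

lemma Cb_QB: "0 < \<delta> \<Longrightarrow> Cb m (QB \<delta> k)"
  unfolding QB_def[abs_def] by (rule Cb_bounded_bilinear[OF bounded_bilinear_blinfun_compose Cb_Q Cb_B])

lemma Cb_Fdelta: "0 < \<delta> \<Longrightarrow> Cb m (Fdelta D H0 E P \<delta>)"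
proof -
  assume "0 < \<delta>"
  then have "Fdelta D H0 E P \<delta> = (\<lambda>x. \<Sum>k\<in>UNIV. axis k (S o\<^sub>L QB \<delta> k x))"
    by (auto simp: vec_lambda_eq_sum_axis[symmetric] vec_eq_iff Fdelta_nth)
  moreover have "Cb m (\<lambda>x. \<Sum>k\<in>UNIV. axis k (S o\<^sub>L QB \<delta> k x))"
    using \<open>0 < \<delta>\<close>
    by (intro Cb_sum Cb_bounded_linear[OF bounded_linear_axis] Cb_QB
        Cb_bounded_linear[OF bounded_bilinear.bounded_linear_right[OF bounded_bilinear_blinfun_compose]]) simp_all
  ultimately show ?thesis
    by simp
qed

definition "B_sup = (SOME M. M \<ge> 0 \<and> (\<forall>k \<alpha> x. length \<alpha> \<le> m \<longrightarrow> norm (pderivs (B k) \<alpha> x) \<le> M))"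
definition "K0_sup = (SOME M. M \<ge> 0 \<and> (\<forall>\<alpha> x. length \<alpha> \<le> m \<longrightarrow> norm (pderivs K0 \<alpha> x) \<le> M))"

lemma B_sup: "0 \<le> B_sup" "length \<alpha> \<le> m \<Longrightarrow> norm (pderivs (B k) \<alpha> x) \<le> B_sup"
  using someI_ex[OF Cb_pderivs_bounded_uniform[where f=B, OF Cb_B]] unfolding B_sup_def[symmetric] by auto

lemma K0_sup: "0 \<le> K0_sup" "length \<alpha> \<le> m \<Longrightarrow> norm (pderivs K0 \<alpha> x) \<le> K0_sup"
  using someI_ex[OF Cb_pderivs_bounded[OF Cb_K0]]
  unfolding K0_sup_def[symmetric] by auto

lemma pderivs_K:
  assumes "b \<noteq> []" and "length b \<le> m"
  shows "pderivs (K \<delta>) b = pderivs K0 b"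
proof -
  obtain b' j where b: "b = b' @ [j]"
    using assms(1) by (metis rev_exhaust)
  have "K0 differentiable (at x)" for x
    using Cb_K0 assms by (cases m) auto
  then have "partial (K \<delta>) j = partial K0 j"
    unfolding K_eq[abs_def] by (intro ext) (simp add: partial_add partial_const)
  then show ?thesis
    by (simp add: b pderivs_snoc)
qed

text \<open>Differentiating \<open>K\<^sub>\<delta> QB\<^sub>\<delta> = B\<close> by the Leibniz rule expresses \<open>\<partial>\<^sup>\<alpha> QB\<^sub>\<delta>\<close> through
  lower-order derivatives of \<open>QB\<^sub>\<delta>\<close> and derivatives of \<open>K\<^sub>\<delta>\<close> of positive order, which do not
  depend on \<open>\<delta>\<close>.\<close>
lemma pderivs_QB_eq:
  assumes "0 < \<delta>" and "length \<alpha> \<le> m"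
  shows "pderivs (QB \<delta> k) \<alpha> x = Q \<delta> x o\<^sub>L (pderivs (B k) \<alpha> x -
            (\<Sum>(b, c)\<leftarrow>tl (index_splits \<alpha>). pderivs K0 b x o\<^sub>L pderivs (QB \<delta> k) c x))"
proof -
  have "(\<lambda>x. K \<delta> x o\<^sub>L QB \<delta> k x) = B k"
    using K_Q assms(1) by (auto simp: QB_def blinfun_compose_assoc[symmetric])
  then have "pderivs (B k) \<alpha> x = pderivs (\<lambda>x. K \<delta> x o\<^sub>L QB \<delta> k x) \<alpha> x"
    by simp
  also have "\<dots> = (\<Sum>(b, c)\<leftarrow>index_splits \<alpha>. pderivs (K \<delta>) b x o\<^sub>L pderivs (QB \<delta> k) c x)"
    by (rule pderivs_bounded_bilinear[OF bounded_bilinear_blinfun_compose Cb_K Cb_QB[OF assms(1)] assms(2)])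
  also have "\<dots> = (K \<delta> x o\<^sub>L pderivs (QB \<delta> k) \<alpha> x) +
        (\<Sum>(b, c)\<leftarrow>tl (index_splits \<alpha>). pderivs (K \<delta>) b x o\<^sub>L pderivs (QB \<delta> k) c x)"
    by (subst index_splits_hd) simp
  also have "(\<Sum>(b, c)\<leftarrow>tl (index_splits \<alpha>). pderivs (K \<delta>) b x o\<^sub>L pderivs (QB \<delta> k) c x) =
             (\<Sum>(b, c)\<leftarrow>tl (index_splits \<alpha>). pderivs K0 b x o\<^sub>L pderivs (QB \<delta> k) c x)"
  proof (intro arg_cong[where f=sum_list] map_cong refl, clarify)
    fix b c assume bc: "(b, c) \<in> set (tl (index_splits \<alpha>))"
    then have "length b \<le> m"
      using index_splits_tl_length_sum[of b c \<alpha>] assms(2) by simp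
    then show "pderivs (K \<delta>) b x o\<^sub>L pderivs (QB \<delta> k) c x = pderivs K0 b x o\<^sub>L pderivs (QB \<delta> k) c x"
      using index_splits_tl[OF bc] by (simp add: pderivs_K)
  qed
  finally have "K \<delta> x o\<^sub>L pderivs (QB \<delta> k) \<alpha> x = pderivs (B k) \<alpha> x -
        (\<Sum>(b, c)\<leftarrow>tl (index_splits \<alpha>). pderivs K0 b x o\<^sub>L pderivs (QB \<delta> k) c x)"
    by (simp add: algebra_simps)
  moreover have "pderivs (QB \<delta> k) \<alpha> x = Q \<delta> x o\<^sub>L (K \<delta> x o\<^sub>L pderivs (QB \<delta> k) \<alpha> x)"
    using Q_K[of \<delta> x] assms(1) by (simp add: blinfun_compose_assoc[symmetric])
  ultimately show ?thesis
    by simp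
qed

lemma norm_pderivs_QB_le:
  assumes "0 < \<delta>" and "length \<alpha> \<le> m" and "0 \<le> A"
    and lower: "\<And>b c. (b, c) \<in> set (tl (index_splits \<alpha>)) \<Longrightarrow> norm (pderivs (QB \<delta> k) c x) \<le> A"
  shows "norm (pderivs (QB \<delta> k) \<alpha> x) \<le> norm (Q \<delta> x) * (B_sup + 2 ^ length \<alpha> * K0_sup * A)"
proof -
  let ?S = "\<Sum>(b, c)\<leftarrow>tl (index_splits \<alpha>). pderivs K0 b x o\<^sub>L pderivs (QB \<delta> k) c x"
  have "norm ?S \<le> real (length (tl (index_splits \<alpha>))) * (K0_sup * A)"
  proof (rule norm_sum_list_le, clarify)
    fix b c assume bc: "(b, c) \<in> set (tl (index_splits \<alpha>))"
    then have "length b \<le> m"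
      using index_splits_tl_length_sum[of b c \<alpha>] assms(2) by simp
    then show "norm (pderivs K0 b x o\<^sub>L pderivs (QB \<delta> k) c x) \<le> K0_sup * A"
      using K0_sup lower[OF bc] by (intro order_trans[OF norm_blinfun_compose] mult_mono) auto
  qed
  also have "\<dots> \<le> 2 ^ length \<alpha> * (K0_sup * A)"
    using K0_sup(1) assms(3) by (intro mult_right_mono) (auto simp: length_index_splits)
  finally have "norm ?S \<le> 2 ^ length \<alpha> * K0_sup * A"
    by simp
  then have "norm (pderivs (B k) \<alpha> x - ?S) \<le> B_sup + 2 ^ length \<alpha> * K0_sup * A"
    using B_sup(2)[OF assms(2)] by (smt (verit) norm_triangle_ineq4)
  then show ?thesis
    unfolding pderivs_QB_eq[OF assms(1,2)]
    by (intro order_trans[OF norm_blinfun_compose] mult_left_mono) auto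
qed

lemma pderivs_Fdelta_nth:
  assumes "0 < \<delta>" and "length \<alpha> \<le> m"
  shows "pderivs (Fdelta D H0 E P \<delta>) \<alpha> x $ k = S o\<^sub>L pderivs (QB \<delta> k) \<alpha> x"
proof -
  have "pderivs (\<lambda>x. Fdelta D H0 E P \<delta> x $ k) \<alpha> = (\<lambda>x. pderivs (Fdelta D H0 E P \<delta>) \<alpha> x $ k)"
    by (rule pderivs_bounded_linear[OF bounded_linear_vec_nth Cb_Fdelta[OF assms(1)] assms(2)])
  moreover have "(\<lambda>x. Fdelta D H0 E P \<delta> x $ k) = (\<lambda>x. S o\<^sub>L QB \<delta> k x)"
    using Fdelta_nth assms(1) by auto
  moreover have "pderivs (\<lambda>x. S o\<^sub>L QB \<delta> k x) \<alpha> = (\<lambda>x. S o\<^sub>L pderivs (QB \<delta> k) \<alpha> x)"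
    by (rule pderivs_bounded_linear[OF bounded_bilinear.bounded_linear_right[OF bounded_bilinear_blinfun_compose]
          Cb_QB[OF assms(1)] assms(2)])
  ultimately show ?thesis
    by (metis (mono_tags, lifting))
qed

lemma norm_pderivs_Fdelta_le:
  assumes "0 < \<delta>" and "length \<alpha> \<le> m"
  shows "norm (pderivs (Fdelta D H0 E P \<delta>) \<alpha> x) \<le> (\<Sum>k\<in>UNIV. norm (pderivs (QB \<delta> k) \<alpha> x))"
proof -
  have "norm (pderivs (Fdelta D H0 E P \<delta>) \<alpha> x $ k) \<le> norm S * norm (pderivs (QB \<delta> k) \<alpha> x)" for k
    unfolding pderivs_Fdelta_nth[OF assms] by (rule norm_blinfun_compose)
  also have "norm S * norm (pderivs (QB \<delta> k) \<alpha> x) \<le> norm (pderivs (QB \<delta> k) \<alpha> x)" for k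
    using norm_S_le by (simp add: mult_left_le_one_le)
  finally show ?thesis
    by (rule order_trans[OF norm_vec_le_sum sum_mono])
qed

lemma Fdelta_apply: "0 < \<delta> \<Longrightarrow> (Fdelta D H0 E P \<delta> x $ k) \<psi> = R \<delta> x (B k x \<psi>)"
  by (simp add: Fdelta_def B_eq RB_apply)

lemma RdPP_apply: "0 < \<delta> \<Longrightarrow> RdPP D H0 E P \<delta> k x \<psi> = R \<delta> x (B k x \<psi>)"
  by (simp add: RdPP_def B_def RB_apply)

lemma Fdelta_apply_in_dom: "0 < \<delta> \<Longrightarrow> (Fdelta D H0 E P \<delta> x $ k) \<psi> \<in> D"
  using R_spec by (simp add: Fdelta_apply)

lemma gnorm_Fdelta_apply_le:
  assumes "0 < \<delta>" and "\<delta> \<le> \<delta>0"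
  shows "gnorm (H0 x) ((Fdelta D H0 E P \<delta> x $ k) \<psi>) \<le>
           (B_sup + (E_sup + \<delta>0 + 1) * norm (RdPP D H0 E P \<delta> k x)) * norm \<psi>"
proof -
  have "gnorm (H0 x) ((Fdelta D H0 E P \<delta> x $ k) \<psi>) \<le>
      norm (B k x \<psi>) + (cmod (spec_pt E \<delta> x) + 1) * norm (RdPP D H0 E P \<delta> k x \<psi>)"
    using gnorm_R_le assms by (simp add: Fdelta_apply RdPP_apply)
  also have "\<dots> \<le> B_sup * norm \<psi> + (E_sup + \<delta>0 + 1) * (norm (RdPP D H0 E P \<delta> k x) * norm \<psi>)"
    using B_sup(2)[of "[]"] norm_spec_pt_le_E_sup[OF assms(1), of x] assms E_sup_nonneg
    by (intro add_mono mult_mono norm_blinfun order_trans[OF norm_blinfun] mult_right_mono) auto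
  finally show ?thesis
    by (simp add: algebra_simps)
qed

lemma norm_Ydelta_le:
  assumes "0 < \<delta>"
  shows "norm (Ydelta D H0 E P \<delta> x) \<le> (\<Sum>k\<in>UNIV. \<delta> * norm (RdPP D H0 E P \<delta> k x))"
proof -
  have "norm (Ydelta D H0 E P \<delta> x $ k) \<le> \<delta> * norm (RdPP D H0 E P \<delta> k x)" for k
    using norm_scaleC_blinfun_le[of "- \<i> * complex_of_real \<delta>" "RdPP D H0 E P \<delta> k x"] assms
    by (simp add: Ydelta_def scaleC_blinfun_def norm_mult)
  then show ?thesis
    by (rule order_trans[OF norm_vec_le_sum sum_mono])
qed

end

section \<open>Estimates in \<open>\<delta>\<close>\<close>

locale resolvent_family_ii = resolvent_family D H0 E x0 C1 G P m
  for D :: "'h::chilbert_space set" and H0 :: "real^'n \<Rightarrow> 'h \<Rightarrow> 'h"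
    and E x0 C1 G P m +
  fixes \<delta>0 :: real and \<eta> :: "real \<Rightarrow> real" and C :: real
  assumes alt_ii: "alt_ii D H0 E P \<delta>0 \<eta> C"
begin

lemma delta_le_eta: "0 < \<delta> \<Longrightarrow> \<delta> \<le> \<delta>0 \<Longrightarrow> \<delta> \<le> \<eta> \<delta>"
  using alt_ii unfolding alt_ii_def by auto

lemma norm_RdPP_le: "0 < \<delta> \<Longrightarrow> \<delta> \<le> \<delta>0 \<Longrightarrow> norm (RdPP D H0 E P \<delta> k x) \<le> \<bar>C\<bar> / \<delta> * \<eta> \<delta>"
  using alt_ii delta_le_eta unfolding alt_ii_def
  by (smt (verit, best) divide_right_mono greaterThanAtMost_iff mult_right_mono)

lemma eta_pos: "0 < \<delta> \<Longrightarrow> \<delta> \<le> \<delta>0 \<Longrightarrow> 0 < \<eta> \<delta>"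
  using delta_le_eta by force

lemma const_div_pow_eta_mono:
  "0 < \<delta> \<Longrightarrow> \<delta> \<le> \<delta>0 \<Longrightarrow> a \<le> b \<Longrightarrow> a / \<delta> ^ r * \<eta> \<delta> \<le> b / \<delta> ^ r * \<eta> \<delta>"
  using eta_pos by (intro mult_right_mono divide_right_mono) (auto intro: less_imp_le)

lemma one_le_eta_div: "0 < \<delta> \<Longrightarrow> \<delta> \<le> \<delta>0 \<Longrightarrow> 1 \<le> \<eta> \<delta> / \<delta>"
  using delta_le_eta by simp

definition "Q_const = (2 * \<delta>0 + E_sup + 1) / C1"

lemma norm_Q_le_Q_const: "0 < \<delta> \<Longrightarrow> \<delta> \<le> \<delta>0 \<Longrightarrow> norm (Q \<delta> x) \<le> Q_const / \<delta>"
proof -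
  assume d: "0 < \<delta>" "\<delta> \<le> \<delta>0"
  have "norm (Q \<delta> x) \<le> (1 + (E_sup + \<delta> + 1) / \<delta>) / C1"
    by (rule norm_Q_le[OF d(1)])
  also have "\<dots> = (2 * \<delta> + E_sup + 1) / C1 / \<delta>"
    using d C1 by (simp add: field_simps)
  also have "\<dots> \<le> Q_const / \<delta>"
    unfolding Q_const_def using d C1 by (intro divide_right_mono) auto
  finally show ?thesis .
qed

lemma Q_const_nonneg: "0 \<le> Q_const"
  using alt_ii C1 E_sup_nonneg by (simp add: Q_const_def alt_ii_def)

lemma div_pow_eta_mono:
  assumes "0 < \<delta>" "\<delta> \<le> \<delta>0" "r \<le> p"
  shows "c / \<delta> ^ r * \<eta> \<delta> \<le> \<bar>c\<bar> * max 1 \<delta>0 ^ p / \<delta> ^ p * \<eta> \<delta>"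
proof -
  have "\<delta> ^ (p - r) \<le> max 1 \<delta>0 ^ p"
    using assms by (intro order_trans[OF power_mono power_increasing]) auto
  then have "\<delta> ^ p \<le> \<delta> ^ r * max 1 \<delta>0 ^ p"
    using assms by (metis le_add_diff_inverse mult_left_mono power_add zero_le_power less_imp_le)
  then have "1 / \<delta> ^ r \<le> max 1 \<delta>0 ^ p / \<delta> ^ p"
    using assms by (simp add: field_simps)
  then have "\<bar>c\<bar> * (1 / \<delta> ^ r) \<le> \<bar>c\<bar> * (max 1 \<delta>0 ^ p / \<delta> ^ p)"
    by (rule mult_left_mono) simp
  moreover have "c / \<delta> ^ r \<le> \<bar>c\<bar> * (1 / \<delta> ^ r)"
    using assms(1) by (simp add: divide_right_mono)
  moreover have "0 \<le> \<eta> \<delta>"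
    using assms delta_le_eta by force
  ultimately show ?thesis
    by (metis (no_types, opaque_lifting) mult_right_mono order_trans times_divide_eq_right)
qed

lemma inverse_le_div_pow_eta:
  assumes "0 < \<delta>" "\<delta> \<le> \<delta>0" "2 \<le> p"
  shows "1 / \<delta> \<le> max 1 \<delta>0 ^ p / \<delta> ^ p * \<eta> \<delta>"
proof -
  have "1 / \<delta> \<le> 1 / \<delta> ^ 2 * \<eta> \<delta>"
    using assms delta_le_eta by (simp add: power2_eq_square field_simps)
  also have "\<dots> \<le> max 1 \<delta>0 ^ p / \<delta> ^ p * \<eta> \<delta>"
    using div_pow_eta_mono[OF assms, of 1] by simp
  finally show ?thesis .
qed

lemma le_divide_C1: "C1 * a \<le> b \<Longrightarrow> a \<le> b / C1"
  using C1 by (simp add: pos_le_divide_eq mult.commute)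

definition QB_order where
  "QB_order p j \<longleftrightarrow> (\<exists>c. \<forall>\<delta>\<in>{0<..\<delta>0}. \<forall>k \<alpha> x. length \<alpha> \<le> j \<longrightarrow>
     norm (pderivs (QB \<delta> k) \<alpha> x) \<le> c / \<delta> ^ p \<alpha> * \<eta> \<delta>)"

lemma norm_QB_le:
  assumes "0 < \<delta>" and "\<delta> \<le> \<delta>0"
  shows "C1 * norm (QB \<delta> k x) \<le> B_sup + (E_sup + \<delta>0 + 1) * norm (RdPP D H0 E P \<delta> k x)"
proof -
  have "C1 * norm (QB \<delta> k x) \<le> norm (B k x) + (E_sup + \<delta> + 1) * norm (S o\<^sub>L Q \<delta> x o\<^sub>L B k x)"
    unfolding QB_def by (rule norm_Q_compose_le[OF assms(1)])
  also have "\<dots> \<le> B_sup + (E_sup + \<delta>0 + 1) * norm (RdPP D H0 E P \<delta> k x)"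
    using B_sup(2)[of "[]" k x] assms E_sup_nonneg
    by (intro add_mono mult_right_mono) (auto simp: RdPP_eq QB_def blinfun_compose_assoc intro!: mult_right_mono)
  finally show ?thesis .
qed

lemma QB_order_0:
  assumes "p [] = 1"
  shows "QB_order p 0"
  unfolding QB_order_def
proof (intro exI ballI allI impI)
  fix \<delta> k x and \<alpha> :: "'n list"
  assume \<delta>: "\<delta> \<in> {0<..\<delta>0}" and "length \<alpha> \<le> 0"
  then have d: "0 < \<delta>" "\<delta> \<le> \<delta>0" and \<alpha>: "\<alpha> = []"
    by auto
  have "C1 * norm (QB \<delta> k x) \<le> B_sup + (E_sup + \<delta>0 + 1) * (\<bar>C\<bar> / \<delta> * \<eta> \<delta>)"
    using norm_QB_le[OF d, of k x] mult_left_mono[OF norm_RdPP_le[OF d, of k x], of "E_sup + \<delta>0 + 1"]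
      d E_sup_nonneg by linarith
  also have "\<dots> \<le> (B_sup + (E_sup + \<delta>0 + 1) * \<bar>C\<bar>) / \<delta> * \<eta> \<delta>"
    using B_sup(1) one_le_eta_div[OF d] d by (simp add: field_simps mult_right_mono)
  finally have "norm (QB \<delta> k x) \<le> (B_sup + (E_sup + \<delta>0 + 1) * \<bar>C\<bar>) / \<delta> * \<eta> \<delta> / C1"
    by (rule le_divide_C1)
  then show "norm (pderivs (QB \<delta> k) \<alpha> x) \<le> (B_sup + (E_sup + \<delta>0 + 1) * \<bar>C\<bar>) / C1 / \<delta> ^ p \<alpha> * \<eta> \<delta>"
    by (simp add: \<alpha> assms mult.commute)
qed

lemma norm_pderivs_QB_le_Suc:
  assumes d: "0 < \<delta>" "\<delta> \<le> \<delta>0" and "length \<alpha> = Suc j" "Suc j \<le> m" "1 \<le> q"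
    and lower: "\<And>\<gamma>. length \<gamma> \<le> j \<Longrightarrow> norm (pderivs (QB \<delta> k) \<gamma> x) \<le> c / \<delta> ^ p \<gamma> * \<eta> \<delta>"
    and p: "\<And>\<gamma>. length \<gamma> \<le> j \<Longrightarrow> p \<gamma> \<le> q"
  shows "norm (pderivs (QB \<delta> k) \<alpha> x) \<le>
    Q_const * (B_sup * max 1 \<delta>0 ^ Suc q + 2 ^ Suc j * K0_sup * (\<bar>c\<bar> * max 1 \<delta>0 ^ q))
      / \<delta> ^ Suc q * \<eta> \<delta>"
proof -
  define A where "A = \<bar>c\<bar> * max 1 \<delta>0 ^ q / \<delta> ^ q * \<eta> \<delta>"
  have "0 \<le> A"
    using d delta_le_eta[OF d] by (simp add: A_def)
  have "norm (pderivs (QB \<delta> k) \<gamma> x) \<le> A" if "(b, \<gamma>) \<in> set (tl (index_splits \<alpha>))" for b \<gamma>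
  proof -
    have "length \<gamma> \<le> j"
      using index_splits_tl[OF that] assms(3) by simp
    then show ?thesis
      unfolding A_def using lower div_pow_eta_mono[OF d p] by (meson order_trans)
  qed
  then have "norm (pderivs (QB \<delta> k) \<alpha> x) \<le> norm (Q \<delta> x) * (B_sup + 2 ^ length \<alpha> * K0_sup * A)"
    using assms(3,4) by (intro norm_pderivs_QB_le[OF d(1) _ \<open>0 \<le> A\<close>]) auto
  also have "\<dots> = norm (Q \<delta> x) * (B_sup + 2 ^ Suc j * K0_sup * A)"
    using assms(3) by simp
  also have "\<dots> \<le> Q_const / \<delta> * (B_sup + 2 ^ Suc j * K0_sup * A)"
    using B_sup(1) K0_sup(1) \<open>0 \<le> A\<close> by (intro mult_right_mono norm_Q_le_Q_const[OF d]) auto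
  also have "\<dots> = Q_const * B_sup * (1 / \<delta>) +
      Q_const * 2 ^ Suc j * K0_sup * (\<bar>c\<bar> * max 1 \<delta>0 ^ q) / \<delta> ^ Suc q * \<eta> \<delta>"
    using d by (simp add: A_def field_simps)
  also have "\<dots> \<le> Q_const * B_sup * (max 1 \<delta>0 ^ Suc q / \<delta> ^ Suc q * \<eta> \<delta>) +
      Q_const * 2 ^ Suc j * K0_sup * (\<bar>c\<bar> * max 1 \<delta>0 ^ q) / \<delta> ^ Suc q * \<eta> \<delta>"
    using inverse_le_div_pow_eta[OF d, of "Suc q"] assms(5) Q_const_nonneg B_sup(1)
    by (intro add_right_mono mult_left_mono) auto
  also have "\<dots> = Q_const * (B_sup * max 1 \<delta>0 ^ Suc q + 2 ^ Suc j * K0_sup * (\<bar>c\<bar> * max 1 \<delta>0 ^ q))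
      / \<delta> ^ Suc q * \<eta> \<delta>"
    using d by (simp add: field_simps)
  finally show ?thesis .
qed

lemma QB_order_Suc:
  assumes "Suc j \<le> m" and "1 \<le> q" and "QB_order p j"
    and lower: "\<And>\<alpha>. length \<alpha> \<le> j \<Longrightarrow> p \<alpha> \<le> q" and top: "\<And>\<alpha>. length \<alpha> = Suc j \<Longrightarrow> p \<alpha> = Suc q"
  shows "QB_order p (Suc j)"
proof -
  obtain c where c: "\<And>\<delta> k \<alpha> x. \<delta> \<in> {0<..\<delta>0} \<Longrightarrow> length \<alpha> \<le> j \<Longrightarrow>
      norm (pderivs (QB \<delta> k) \<alpha> x) \<le> c / \<delta> ^ p \<alpha> * \<eta> \<delta>"
    using assms(3) unfolding QB_order_def by blast
  define c' where "c' = Q_const * (B_sup * max 1 \<delta>0 ^ Suc q + 2 ^ Suc j * K0_sup * (\<bar>c\<bar> * max 1 \<delta>0 ^ q))"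
  have "norm (pderivs (QB \<delta> k) \<alpha> x) \<le> max c c' / \<delta> ^ p \<alpha> * \<eta> \<delta>"
    if \<delta>: "\<delta> \<in> {0<..\<delta>0}" and "length \<alpha> \<le> Suc j" for \<delta> k \<alpha> x
  proof (cases "length \<alpha> \<le> j")
    case True
    then show ?thesis
      using c[OF \<delta> True, of k x] const_div_pow_eta_mono[of \<delta> c "max c c'" "p \<alpha>"] \<delta>
      by (meson greaterThanAtMost_iff max.cobounded1 order_trans)
  next
    case False
    then have "length \<alpha> = Suc j"
      using that by simp
    then have "norm (pderivs (QB \<delta> k) \<alpha> x) \<le> c' / \<delta> ^ p \<alpha> * \<eta> \<delta>"
      unfolding c'_def top[OF \<open>length \<alpha> = Suc j\<close>] using \<delta> assms
      by (intro norm_pderivs_QB_le_Suc[where c=c and p=p]) (auto intro!: c[simplified])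
    then show ?thesis
      using const_div_pow_eta_mono[of \<delta> c' "max c c'" "p \<alpha>"] \<delta>
      by (meson greaterThanAtMost_iff max.cobounded2 order_trans)
  qed
  then show ?thesis
    unfolding QB_order_def by blast
qed

lemma QB_order_Suc_length: "j \<le> m \<Longrightarrow> QB_order (\<lambda>\<alpha>. Suc (length \<alpha>)) j"
proof (induction j)
  case 0
  then show ?case
    by (intro QB_order_0) simp
next
  case (Suc j)
  then show ?case
    by (intro QB_order_Suc[where q="Suc j"]) auto
qed

lemma Fdelta_pderivs_bound:
  assumes "QB_order p m"
  shows "\<exists>c. \<forall>\<delta>\<in>{0<..\<delta>0}. \<forall>\<alpha> x. length \<alpha> \<le> m \<longrightarrow>
    norm (pderivs (Fdelta D H0 E P \<delta>) \<alpha> x) \<le> c / \<delta> ^ p \<alpha> * \<eta> \<delta>"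
proof -
  obtain c where c: "\<And>\<delta> k \<alpha> x. \<delta> \<in> {0<..\<delta>0} \<Longrightarrow> length \<alpha> \<le> m \<Longrightarrow>
      norm (pderivs (QB \<delta> k) \<alpha> x) \<le> c / \<delta> ^ p \<alpha> * \<eta> \<delta>"
    using assms unfolding QB_order_def by blast
  have "norm (pderivs (Fdelta D H0 E P \<delta>) \<alpha> x) \<le> (real CARD('n) * c) / \<delta> ^ p \<alpha> * \<eta> \<delta>"
    if "\<delta> \<in> {0<..\<delta>0}" "length \<alpha> \<le> m" for \<delta> \<alpha> x
  proof -
    have "norm (pderivs (Fdelta D H0 E P \<delta>) \<alpha> x) \<le> (\<Sum>k\<in>UNIV. norm (pderivs (QB \<delta> k) \<alpha> x))"
      using that by (intro norm_pderivs_Fdelta_le) auto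
    also have "\<dots> \<le> (\<Sum>k\<in>(UNIV::'n set). c / \<delta> ^ p \<alpha> * \<eta> \<delta>)"
      using c[OF that] by (rule sum_mono)
    finally show ?thesis
      by simp
  qed
  then show ?thesis
    by blast
qed

lemma Fdelta_tuple_bound:
  "\<exists>c. \<forall>\<delta>\<in>{0<..\<delta>0}. \<forall>x. tuple_bound_D D (H0 x) (Fdelta D H0 E P \<delta> x) (c / \<delta> * \<eta> \<delta>)"
proof -
  define g where "g = B_sup + (E_sup + \<delta>0 + 1) * \<bar>C\<bar>"
  have "tuple_bound_D D (H0 x) (Fdelta D H0 E P \<delta> x) ((real CARD('n) * g) / \<delta> * \<eta> \<delta>)"
    if d: "0 < \<delta>" "\<delta> \<le> \<delta>0" for \<delta> x
    unfolding tuple_bound_D_def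
  proof (intro conjI allI)
    show "(Fdelta D H0 E P \<delta> x $ k) \<psi> \<in> D" for \<psi> k
      by (rule Fdelta_apply_in_dom[OF d(1)])
    fix \<psi>
    have "gnorm (H0 x) ((Fdelta D H0 E P \<delta> x $ k) \<psi>) \<le> g / \<delta> * \<eta> \<delta> * norm \<psi>" for k
    proof -
      have "B_sup + (E_sup + \<delta>0 + 1) * norm (RdPP D H0 E P \<delta> k x) \<le>
          B_sup / \<delta> * \<eta> \<delta> + (E_sup + \<delta>0 + 1) * (\<bar>C\<bar> / \<delta> * \<eta> \<delta>)"
      proof (rule add_mono)
        show "B_sup \<le> B_sup / \<delta> * \<eta> \<delta>"
          using delta_le_eta[OF d] B_sup(1) d by (simp add: field_simps mult_right_mono)
        show "(E_sup + \<delta>0 + 1) * norm (RdPP D H0 E P \<delta> k x) \<le> (E_sup + \<delta>0 + 1) * (\<bar>C\<bar> / \<delta> * \<eta> \<delta>)"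
          using norm_RdPP_le[OF d] d E_sup_nonneg by (intro mult_left_mono) auto
      qed
      also have "\<dots> = g / \<delta> * \<eta> \<delta>"
        using d by (simp add: g_def field_simps)
      finally show ?thesis
        by (rule order_trans[OF gnorm_Fdelta_apply_le[OF d] mult_right_mono]) simp
    qed
    then have "(\<Sum>k\<in>UNIV. gnorm (H0 x) ((Fdelta D H0 E P \<delta> x $ k) \<psi>)) \<le>
        (\<Sum>k\<in>(UNIV::'n set). g / \<delta> * \<eta> \<delta> * norm \<psi>)"
      by (rule sum_mono)
    then have "(\<Sum>k\<in>UNIV. gnorm (H0 x) ((Fdelta D H0 E P \<delta> x $ k) \<psi>)) \<le>
        real CARD('n) * (g / \<delta> * \<eta> \<delta> * norm \<psi>)"
      by simp
    moreover have "sqrt (\<Sum>k\<in>UNIV. (gnorm (H0 x) ((Fdelta D H0 E P \<delta> x $ k) \<psi>))\<^sup>2) \<le>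
        (\<Sum>k\<in>UNIV. gnorm (H0 x) ((Fdelta D H0 E P \<delta> x $ k) \<psi>))"
      using L2_set_le_sum[of UNIV "\<lambda>k. gnorm (H0 x) ((Fdelta D H0 E P \<delta> x $ k) \<psi>)"]
      by (simp add: L2_set_def gnorm_def)
    ultimately show "sqrt (\<Sum>k\<in>UNIV. (gnorm (H0 x) ((Fdelta D H0 E P \<delta> x $ k) \<psi>))\<^sup>2) \<le>
        real CARD('n) * g / \<delta> * \<eta> \<delta> * norm \<psi>"
      by (simp add: field_simps)
  qed
  then show ?thesis
    by (intro exI[of _ "real CARD('n) * g"]) simp
qed

lemma Ydelta_bound: "\<exists>c. \<forall>\<delta>\<in>{0<..\<delta>0}. \<forall>x. norm (Ydelta D H0 E P \<delta> x) \<le> c * \<eta> \<delta>"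
proof -
  have "norm (Ydelta D H0 E P \<delta> x) \<le> (real CARD('n) * \<bar>C\<bar>) * \<eta> \<delta>" if d: "0 < \<delta>" "\<delta> \<le> \<delta>0" for \<delta> x
  proof -
    have "\<delta> * norm (RdPP D H0 E P \<delta> k x) \<le> \<bar>C\<bar> * \<eta> \<delta>" for k
      using mult_left_mono[OF norm_RdPP_le[OF d, of k x], of \<delta>] d by simp
    then have "(\<Sum>k\<in>UNIV. \<delta> * norm (RdPP D H0 E P \<delta> k x)) \<le> (\<Sum>k\<in>(UNIV::'n set). \<bar>C\<bar> * \<eta> \<delta>)"
      by (rule sum_mono)
    then show ?thesis
      using norm_Ydelta_le[OF d(1), of x] by simp
  qed
  then show ?thesis
    by (intro exI[of _ "real CARD('n) * \<bar>C\<bar>"]) simp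
qed

lemma Fdelta_Ydelta_bounds:
  "\<exists>C'. \<forall>\<delta>\<in>{0<..\<delta>0}.
     (\<forall>x. tuple_bound_D D (H0 x) (Fdelta D H0 E P \<delta> x) (C' / \<delta> * \<eta> \<delta>)) \<and>
     (\<forall>j\<in>{1..m}. \<forall>\<alpha>. length \<alpha> = j \<longrightarrow>
        (\<forall>x. norm (pderivs (Fdelta D H0 E P \<delta>) \<alpha> x) \<le> C' / \<delta> ^ (j + 1) * \<eta> \<delta>)) \<and>
     (\<forall>x. norm (Ydelta D H0 E P \<delta> x) \<le> C' * \<eta> \<delta>)"
proof -
  obtain c1 where c1: "\<forall>\<delta>\<in>{0<..\<delta>0}. \<forall>x. tuple_bound_D D (H0 x) (Fdelta D H0 E P \<delta> x) (c1 / \<delta> * \<eta> \<delta>)"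
    using Fdelta_tuple_bound by blast
  obtain c2 where c2: "\<forall>\<delta>\<in>{0<..\<delta>0}. \<forall>\<alpha> x. length \<alpha> \<le> m \<longrightarrow>
      norm (pderivs (Fdelta D H0 E P \<delta>) \<alpha> x) \<le> c2 / \<delta> ^ Suc (length \<alpha>) * \<eta> \<delta>"
    using Fdelta_pderivs_bound[OF QB_order_Suc_length] by blast
  obtain c3 where c3: "\<forall>\<delta>\<in>{0<..\<delta>0}. \<forall>x. norm (Ydelta D H0 E P \<delta> x) \<le> c3 * \<eta> \<delta>"
    using Ydelta_bound by blast
  define C' where "C' = max c1 (max c2 c3)"
  have "(\<forall>x. tuple_bound_D D (H0 x) (Fdelta D H0 E P \<delta> x) (C' / \<delta> * \<eta> \<delta>)) \<and>
     (\<forall>j\<in>{1..m}. \<forall>\<alpha>. length \<alpha> = j \<longrightarrow>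
        (\<forall>x. norm (pderivs (Fdelta D H0 E P \<delta>) \<alpha> x) \<le> C' / \<delta> ^ (j + 1) * \<eta> \<delta>)) \<and>
     (\<forall>x. norm (Ydelta D H0 E P \<delta> x) \<le> C' * \<eta> \<delta>)" if \<delta>: "\<delta> \<in> {0<..\<delta>0}" for \<delta>
  proof -
    have d: "0 < \<delta>" "\<delta> \<le> \<delta>0"
      using \<delta> by auto
    have m1: "c1 / \<delta> * \<eta> \<delta> \<le> C' / \<delta> * \<eta> \<delta>"
      using const_div_pow_eta_mono[OF d, of c1 C' 1] by (simp add: C'_def)
    have m2: "c2 / \<delta> ^ (j + 1) * \<eta> \<delta> \<le> C' / \<delta> ^ (j + 1) * \<eta> \<delta>" for j
      using const_div_pow_eta_mono[OF d, of c2 C' "j + 1"] by (simp add: C'_def del: power_Suc)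
    have m3: "c3 * \<eta> \<delta> \<le> C' * \<eta> \<delta>"
      using eta_pos[OF d] by (simp add: C'_def)
    show ?thesis
    proof (intro conjI allI ballI impI)
      fix x
      show "tuple_bound_D D (H0 x) (Fdelta D H0 E P \<delta> x) (C' / \<delta> * \<eta> \<delta>)"
        using c1 \<delta> m1 by (blast intro: tuple_bound_D_mono)
      show "norm (Ydelta D H0 E P \<delta> x) \<le> C' * \<eta> \<delta>"
        using c3 \<delta> m3 by (blast intro: order_trans)
    next
      fix j and \<alpha> :: "'n list" and x
      assume "j \<in> {1..m}" "length \<alpha> = j"
      then show "norm (pderivs (Fdelta D H0 E P \<delta>) \<alpha> x) \<le> C' / \<delta> ^ (j + 1) * \<eta> \<delta>"
        using c2 \<delta> m2[of j] by (metis Suc_eq_plus1 atLeastAtMost_iff order_trans)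
    qed
  qed
  then show ?thesis
    by blast
qed

end

locale resolvent_family_iii = resolvent_family D H0 E x0 C1 G P m
  for D :: "'h::chilbert_space set" and H0 :: "real^'n \<Rightarrow> 'h \<Rightarrow> 'h"
    and E x0 C1 G P m +
  fixes \<delta>0 :: real and \<eta> :: "real \<Rightarrow> real" and C :: real
  assumes alt_iii: "alt_iii D H0 E P \<delta>0 \<eta> C"

sublocale resolvent_family_iii \<subseteq> resolvent_family_ii
  using alt_iii by unfold_locales (simp add: alt_iii_def)

context resolvent_family_iii
begin

lemma norm_partial_RdPP_le:
  "0 < \<delta> \<Longrightarrow> \<delta> \<le> \<delta>0 \<Longrightarrow> norm (partial (RdPP D H0 E P \<delta> k) l x) \<le> \<bar>C\<bar> / \<delta> * \<eta> \<delta>"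
proof -
  assume d: "0 < \<delta>" "\<delta> \<le> \<delta>0"
  then have "norm (partial (RdPP D H0 E P \<delta> k) l x) \<le> C / \<delta> * \<eta> \<delta>"
    using alt_iii unfolding alt_iii_def by auto
  also have "\<dots> \<le> \<bar>C\<bar> / \<delta> * \<eta> \<delta>"
    using const_div_pow_eta_mono[OF d, of C "\<bar>C\<bar>" 1] by simp
  finally show ?thesis .
qed

lemma norm_partial_QB_le:
  assumes d: "0 < \<delta>" "\<delta> \<le> \<delta>0" and "1 \<le> m"
  shows "C1 * norm (pderivs (QB \<delta> k) [l] x) \<le>
    B_sup + K0_sup * norm (QB \<delta> k x) + (E_sup + \<delta>0 + 1) * norm (partial (RdPP D H0 E P \<delta> k) l x)"
proof -
  define W where "W = pderivs (B k) [l] x - (pderivs K0 [l] x o\<^sub>L QB \<delta> k x)"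
  have QB_l: "pderivs (QB \<delta> k) [l] x = Q \<delta> x o\<^sub>L W"
    using pderivs_QB_eq[OF d(1), of "[l]" k x] assms(3) by (simp add: W_def)
  have "QB \<delta> k differentiable (at y)" for y
    using differentiable_pderivs[OF Cb_QB[OF d(1)], of "[]"] assms(3) by simp
  moreover have "RdPP D H0 E P \<delta> k = (\<lambda>y. S o\<^sub>L QB \<delta> k y)"
    using RdPP_eq d(1) by auto
  ultimately have RdPP_l: "partial (RdPP D H0 E P \<delta> k) l x = S o\<^sub>L (Q \<delta> x o\<^sub>L W)"
    unfolding QB_l[symmetric]
    by (simp add: partial_bounded_linear[OF
          bounded_bilinear.bounded_linear_right[OF bounded_bilinear_blinfun_compose]])
  have W: "norm W \<le> B_sup + K0_sup * norm (QB \<delta> k x)"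
    unfolding W_def using B_sup(2)[of "[l]" k x] K0_sup(1) K0_sup(2)[of "[l]" x] assms(3)
    by (intro order_trans[OF norm_triangle_ineq4] add_mono order_trans[OF norm_blinfun_compose]
        mult_right_mono) auto
  have "C1 * norm (pderivs (QB \<delta> k) [l] x) \<le> norm W + (E_sup + \<delta> + 1) * norm (S o\<^sub>L Q \<delta> x o\<^sub>L W)"
    unfolding QB_l by (rule norm_Q_compose_le[OF d(1)])
  also have "\<dots> \<le> B_sup + K0_sup * norm (QB \<delta> k x) + (E_sup + \<delta>0 + 1) * norm (partial (RdPP D H0 E P \<delta> k) l x)"
    unfolding RdPP_l blinfun_compose_assoc using W d E_sup_nonneg
    by (intro add_mono mult_right_mono) auto
  finally show ?thesis .
qed

lemma QB_order_1:
  assumes "1 \<le> m"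
  shows "QB_order (\<lambda>\<alpha>. max (length \<alpha>) 1) 1"
proof -
  obtain c0 where c0: "\<And>\<delta> k x. \<delta> \<in> {0<..\<delta>0} \<Longrightarrow> norm (QB \<delta> k x) \<le> c0 / \<delta> * \<eta> \<delta>"
    using QB_order_0[of "\<lambda>\<alpha>. max (length \<alpha>) 1"] unfolding QB_order_def by fastforce
  define c1 where "c1 = (B_sup + K0_sup * \<bar>c0\<bar> + (E_sup + \<delta>0 + 1) * \<bar>C\<bar>) / C1"
  have "norm (pderivs (QB \<delta> k) \<alpha> x) \<le> max c0 c1 / \<delta> ^ max (length \<alpha>) 1 * \<eta> \<delta>"
    if \<delta>: "\<delta> \<in> {0<..\<delta>0}" and "length \<alpha> \<le> 1" for \<delta> k \<alpha> x
  proof -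
    have d: "0 < \<delta>" "\<delta> \<le> \<delta>0"
      using \<delta> by auto
    consider "\<alpha> = []" | l where "\<alpha> = [l]"
      using \<open>length \<alpha> \<le> 1\<close> by (cases \<alpha>) auto
    then show ?thesis
    proof cases
      case 1
      then show ?thesis
        using c0[OF \<delta>, of k x] const_div_pow_eta_mono[OF d, of c0 "max c0 c1" 1] by simp
    next
      case (2 l)
      have "C1 * norm (pderivs (QB \<delta> k) [l] x) \<le>
          B_sup / \<delta> * \<eta> \<delta> + K0_sup * (\<bar>c0\<bar> / \<delta> * \<eta> \<delta>) + (E_sup + \<delta>0 + 1) * (\<bar>C\<bar> / \<delta> * \<eta> \<delta>)"
      proof (rule order_trans[OF norm_partial_QB_le[OF d assms]], intro add_mono)
        show "B_sup \<le> B_sup / \<delta> * \<eta> \<delta>"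
          using delta_le_eta[OF d] B_sup(1) d by (simp add: field_simps mult_right_mono)
        show "K0_sup * norm (QB \<delta> k x) \<le> K0_sup * (\<bar>c0\<bar> / \<delta> * \<eta> \<delta>)"
          using K0_sup(1) c0[OF \<delta>, of k x] const_div_pow_eta_mono[OF d, of c0 "\<bar>c0\<bar>" 1]
          by (intro mult_left_mono) (auto intro: order_trans)
        show "(E_sup + \<delta>0 + 1) * norm (partial (RdPP D H0 E P \<delta> k) l x) \<le> (E_sup + \<delta>0 + 1) * (\<bar>C\<bar> / \<delta> * \<eta> \<delta>)"
          using norm_partial_RdPP_le[OF d] d E_sup_nonneg by (intro mult_left_mono) auto
      qed
      also have "\<dots> = C1 * (c1 / \<delta> * \<eta> \<delta>)"
        using C1 d by (simp add: c1_def field_simps)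
      finally have "norm (pderivs (QB \<delta> k) [l] x) \<le> c1 / \<delta> * \<eta> \<delta>"
        using C1 by (rule mult_left_le_imp_le)
      then show ?thesis
        using const_div_pow_eta_mono[OF d, of c1 "max c0 c1" 1] 2 by simp
    qed
  qed
  then show ?thesis
    unfolding QB_order_def by blast
qed

lemma QB_order_max_length_1: "1 \<le> j \<Longrightarrow> j \<le> m \<Longrightarrow> QB_order (\<lambda>\<alpha>. max (length \<alpha>) 1) j"
proof (induction j)
  case (Suc j)
  show ?case
  proof (cases "j = 0")
    case True
    then show ?thesis
      using QB_order_1 Suc.prems by simp
  next
    case False
    then show ?thesis
      using Suc by (intro QB_order_Suc[where q=j]) auto
  qed
qed simp

lemma Fdelta_pderivs_improved_bounds:
  "\<exists>C'. \<forall>\<delta>\<in>{0<..\<delta>0}. \<forall>j\<in>{1..m}. \<forall>\<alpha>. length \<alpha> = j \<longrightarrow>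
     (\<forall>x. norm (pderivs (Fdelta D H0 E P \<delta>) \<alpha> x) \<le> C' / \<delta> ^ j * \<eta> \<delta>)"
proof (cases "m = 0")
  case False
  then have "QB_order (\<lambda>\<alpha>. max (length \<alpha>) 1) m"
    by (intro QB_order_max_length_1) auto
  then obtain c where c: "\<And>\<delta> \<alpha> x. \<delta> \<in> {0<..\<delta>0} \<Longrightarrow> length \<alpha> \<le> m \<Longrightarrow>
      norm (pderivs (Fdelta D H0 E P \<delta>) \<alpha> x) \<le> c / \<delta> ^ max (length \<alpha>) 1 * \<eta> \<delta>"
    using Fdelta_pderivs_bound by blast
  show ?thesis
  proof (intro exI[of _ c] ballI allI impI)
    fix \<delta> j and \<alpha> :: "'n list" and x
    assume "\<delta> \<in> {0<..\<delta>0}" "j \<in> {1..m}" "length \<alpha> = j"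
    then show "norm (pderivs (Fdelta D H0 E P \<delta>) \<alpha> x) \<le> c / \<delta> ^ j * \<eta> \<delta>"
      using c[of \<delta> \<alpha> x] by (simp add: max_absorb1)
  qed
qed simp

end

context resolvent_family
begin

lemma norm_RdPP_le_B_sup: "0 < \<delta> \<Longrightarrow> norm (RdPP D H0 E P \<delta> k x) \<le> B_sup / \<delta>"
proof (rule norm_blinfun_bound)
  assume d: "0 < \<delta>"
  then show "0 \<le> B_sup / \<delta>"
    using B_sup(1) by simp
  fix \<psi>
  have "norm (RdPP D H0 E P \<delta> k x \<psi>) \<le> norm (B k x \<psi>) / \<delta>"
    using norm_R_le[of \<delta> x "B k x \<psi>"] d by (simp add: RdPP_apply field_simps)
  also have "\<dots> \<le> B_sup * norm \<psi> / \<delta>"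
    using d B_sup(2)[of "[]" k x]
    by (intro divide_right_mono order_trans[OF norm_blinfun] mult_right_mono) auto
  finally show "norm (RdPP D H0 E P \<delta> k x \<psi>) \<le> B_sup / \<delta> * norm \<psi>"
    by simp
qed

lemma alt_ii_trivial: "alt_ii D H0 E P 1 (\<lambda>_. 1) B_sup"
  unfolding alt_ii_def using norm_RdPP_le_B_sup by auto

lemma bounds_under_alt_ii:
  assumes "alt_ii D H0 E P \<delta>0 \<eta> C \<or> alt_iii D H0 E P \<delta>0 \<eta> C"
  shows "\<exists>C'. \<forall>\<delta>\<in>{0<..\<delta>0}.
     (\<forall>x. tuple_bound_D D (H0 x) (Fdelta D H0 E P \<delta> x) (C' / \<delta> * \<eta> \<delta>)) \<and>
     (\<forall>j\<in>{1..m}. \<forall>\<alpha>. length \<alpha> = j \<longrightarrow>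
        (\<forall>x. norm (pderivs (Fdelta D H0 E P \<delta>) \<alpha> x) \<le> C' / \<delta> ^ (j + 1) * \<eta> \<delta>)) \<and>
     (\<forall>x. norm (Ydelta D H0 E P \<delta> x) \<le> C' * \<eta> \<delta>)"
proof -
  interpret resolvent_family_ii D H0 E x0 C1 G P m \<delta>0 \<eta> C
    using assms by unfold_locales (auto simp: alt_iii_def)
  show ?thesis
    by (rule Fdelta_Ydelta_bounds)
qed

lemma improved_bounds_under_alt_iii:
  assumes "alt_iii D H0 E P \<delta>0 \<eta> C"
  shows "\<exists>C'. \<forall>\<delta>\<in>{0<..\<delta>0}. \<forall>j\<in>{1..m}. \<forall>\<alpha>. length \<alpha> = j \<longrightarrow>
     (\<forall>x. norm (pderivs (Fdelta D H0 E P \<delta>) \<alpha> x) \<le> C' / \<delta> ^ j * \<eta> \<delta>)"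
proof -
  interpret resolvent_family_iii D H0 E x0 C1 G P m \<delta>0 \<eta> C
    using assms by unfold_locales
  show ?thesis
    by (rule Fdelta_pderivs_improved_bounds)
qed

lemma bounds_under_alt_i:
  "\<exists>\<delta>0>0. \<exists>C'. \<forall>\<delta>\<in>{0<..\<delta>0}.
     (\<forall>x. tuple_bound_D D (H0 x) (Fdelta D H0 E P \<delta> x) (C' / \<delta>)) \<and>
     (\<forall>j\<in>{1..m}. \<forall>\<alpha>. length \<alpha> = j \<longrightarrow>
        (\<forall>x. norm (pderivs (Fdelta D H0 E P \<delta>) \<alpha> x) \<le> C' / \<delta> ^ (j + 1)))"
  using bounds_under_alt_ii[OF disjI1[OF alt_ii_trivial]] by (intro exI[of _ "1::real"]) (simp, meson)

lemma Ydelta_vanishes_under_alt_i: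
  assumes "alt_i D H0 E P"
  shows "\<forall>\<epsilon>>0. \<exists>d>0. \<forall>\<delta>. 0 < \<delta> \<and> \<delta> < d \<longrightarrow> (\<forall>x. norm (Ydelta D H0 E P \<delta> x) \<le> \<epsilon>)"
proof (intro allI impI)
  fix \<epsilon> :: real
  assume "0 < \<epsilon>"
  then have "\<forall>k. \<exists>d>0. \<forall>\<delta>. 0 < \<delta> \<and> \<delta> < d \<longrightarrow> (\<forall>x. \<delta> * norm (RdPP D H0 E P \<delta> k x) \<le> \<epsilon> / CARD('n))"
    using assms unfolding alt_i_def by simp
  then obtain d where d: "\<And>k. 0 < d k"
    and small: "\<And>k \<delta> x. 0 < \<delta> \<Longrightarrow> \<delta> < d k \<Longrightarrow> \<delta> * norm (RdPP D H0 E P \<delta> k x) \<le> \<epsilon> / CARD('n)"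
    by metis
  have "norm (Ydelta D H0 E P \<delta> x) \<le> \<epsilon>" if "0 < \<delta>" "\<delta> < Min (range d)" for \<delta> x
  proof -
    have "\<delta> * norm (RdPP D H0 E P \<delta> k x) \<le> \<epsilon> / CARD('n)" for k
      using that Min_le[of "range d" "d k"] by (intro small) auto
    then have "(\<Sum>k\<in>UNIV. \<delta> * norm (RdPP D H0 E P \<delta> k x)) \<le> (\<Sum>k\<in>(UNIV::'n set). \<epsilon> / CARD('n))"
      by (rule sum_mono)
    then show ?thesis
      using norm_Ydelta_le[OF that(1), of x] by simp
  qed
  moreover have "0 < Min (range d)"
    using d by simp
  ultimately show "\<exists>d>0. \<forall>\<delta>. 0 < \<delta> \<and> \<delta> < d \<longrightarrow> (\<forall>x. norm (Ydelta D H0 E P \<delta> x) \<le> \<epsilon>)"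
    by blast
qed

end

theorem mainTheorem3:
  fixes D :: "'h::chilbert_space set"
    and H0 :: "real^'n \<Rightarrow> 'h \<Rightarrow> 'h"
    and P :: "real^'n \<Rightarrow> ('h \<Rightarrow>\<^sub>L 'h)"
    and E :: "real^'n \<Rightarrow> real"
    and x0 :: "real^'n" and C1 C2 :: real and m :: nat
  assumes separable: "\<exists>S::'h set. countable S \<and> closure S = UNIV"
    and sa: "\<forall>x. selfadjoint_on D (H0 x)"
    and C1: "C1 > 0"
    and normeq: "\<forall>x. \<forall>\<psi>\<in>D. C1 * gnorm (H0 x0) \<psi> \<le> gnorm (H0 x) \<psi> \<and> gnorm (H0 x) \<psi> \<le> C2 * gnorm (H0 x0) \<psi>"
    and m: "m \<ge> 2"
    and H0reg: "CbD m D H0 x0"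
    and Pproj: "\<forall>x. orth_proj (P x)"
    and eig: "\<forall>x \<phi>. blinfun_apply (P x) \<phi> \<in> D \<and>
                 H0 x (blinfun_apply (P x) \<phi>) = scaleC (complex_of_real (E x)) (blinfun_apply (P x) \<phi>)"
    and Preg: "Cb (Suc m) P"
    and Ereg: "Cb m E"
    and alt: "alt_i D H0 E P \<or> (\<exists>\<delta>0 \<eta> C. alt_ii D H0 E P \<delta>0 \<eta> C) \<or> (\<exists>\<delta>0 \<eta> C. alt_iii D H0 E P \<delta>0 \<eta> C)"
  shows
    "(\<forall>\<delta>>0. Cb m (Fdelta D H0 E P \<delta>)) \<and>
     (\<forall>\<delta>0 \<eta> C. alt_ii D H0 E P \<delta>0 \<eta> C \<or> alt_iii D H0 E P \<delta>0 \<eta> C \<longrightarrow>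
        (\<exists>C'. \<forall>\<delta>\<in>{0<..\<delta>0}.
           (\<forall>x. tuple_bound_D D (H0 x) (Fdelta D H0 E P \<delta> x) (C' / \<delta> * \<eta> \<delta>)) \<and>
           (\<forall>j\<in>{1..m}. \<forall>\<alpha>. length \<alpha> = j \<longrightarrow>
              (\<forall>x. norm (pderivs (Fdelta D H0 E P \<delta>) \<alpha> x) \<le> C' / \<delta> ^ (j + 1) * \<eta> \<delta>)) \<and>
           (\<forall>x. norm (Ydelta D H0 E P \<delta> x) \<le> C' * \<eta> \<delta>))) \<and>
     (alt_i D H0 E P \<longrightarrow>
        (\<exists>\<delta>0>0. \<exists>C'. \<forall>\<delta>\<in>{0<..\<delta>0}.
           (\<forall>x. tuple_bound_D D (H0 x) (Fdelta D H0 E P \<delta> x) (C' / \<delta>)) \<and>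
           (\<forall>j\<in>{1..m}. \<forall>\<alpha>. length \<alpha> = j \<longrightarrow>
              (\<forall>x. norm (pderivs (Fdelta D H0 E P \<delta>) \<alpha> x) \<le> C' / \<delta> ^ (j + 1)))) \<and>
        (\<forall>\<epsilon>>0. \<exists>d>0. \<forall>\<delta>. 0 < \<delta> \<and> \<delta> < d \<longrightarrow> (\<forall>x. norm (Ydelta D H0 E P \<delta> x) \<le> \<epsilon>))) \<and>
     (\<forall>\<delta>0 \<eta> C. alt_iii D H0 E P \<delta>0 \<eta> C \<longrightarrow>
        (\<exists>C'. \<forall>\<delta>\<in>{0<..\<delta>0}. \<forall>j\<in>{1..m}. \<forall>\<alpha>. length \<alpha> = j \<longrightarrow>
              (\<forall>x. norm (pderivs (Fdelta D H0 E P \<delta>) \<alpha> x) \<le> C' / \<delta> ^ j * \<eta> \<delta>)))"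
proof -
  obtain G :: "real^'n \<Rightarrow> ('h \<Rightarrow>\<^sub>L 'h)" where "Cb m G" and "\<forall>x. \<forall>\<psi>\<in>D. G x (H0 x0 \<psi> - scaleC \<i> \<psi>) = H0 x \<psi>"
    using H0reg unfolding CbD_def by blast
  moreover have "P x o\<^sub>L P x = P x" for x
    using Pproj unfolding orth_proj_def by (intro blinfun_eqI) simp
  ultimately interpret resolvent_family D H0 E x0 C1 G P m
    using sa C1 normeq Preg Ereg by unfold_locales auto
  show ?thesis
    using Cb_Fdelta bounds_under_alt_ii bounds_under_alt_i Ydelta_vanishes_under_alt_i
      improved_bounds_under_alt_iii
    by blast
qed

end
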